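(* Let $d \ge 3$, $F \leq F' \leq \mathrm{Sym}(\Omega)$ with $F'$ preserving each $F$-orbit in $\Omega$, and let $n = [F':F]$. Then the map $\varphi: G(F,F') \to G_{n,d}$, $\varphi(\gamma) = (\rho_\gamma, \gamma)$, where $\rho_\gamma = (\rho_{\gamma,v})_{v \in V_d}$ and $\rho_{\gamma,v} = \alpha(\sigma(\gamma,\gamma^{-1}v))$, is a well-defined group homomorphism which is injective and continuous, and whose image is closed and cocompact in $G_{n,d}$.
   Context: $\Omega$ is a set with $|\Omega|=d$; $T_d$ is the $d$-regular tree with vertex set $V_d$, edge set $E_d$, and a coloring $c: E_d \to \Omega$ restricting at every vertex $v$ to a bijection from the set $E(v)$ of edges at $v$ onto $\Omega$. The local permutation of $g\in\mathrm{Aut}(T_d)$ at $v$ is $\sigma(g,v) = c|_{E(gv)} \circ g \circ (c|_{E(v)})^{-1}$. $U(F)$ is the group of $g$ with $\sigma(g,v) \in F$ for all $v$; $G(F,F')$ is the group of $g$ with $\sigma(g,v) \in F'$ for all $v$ and $\sigma(g,v) \in F$ for all but finitely many $v$, endowed with the group topology for which the inclusion of $U(F)$ (with topology induced from $\mathrm{Aut}(T_d)$) is continuous and open. $\Sigma_n = \{0,\dots,n-1\}$, $\mathfrak{S}_n = \mathrm{Sym}(\Sigma_n)$, $\mathfrak{S}_{n-1}$ the stabilizer of $0$. Fix a bijection $\Sigma_n \to F'/F$ sending $0$ to the coset $F$; $\alpha: F' \to \mathfrak{S}_n$ is the homomorphism induced by the left action of $F'$ on $F'/F$ (so $\alpha(F)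 \leq \mathfrak{S}_{n-1}$). $G_{n,d} = \mathfrak{S}_n^{V_d,\mathfrak{S}_{n-1}} \rtimes \mathrm{Aut}(T_d)$, where $\mathfrak{S}_n^{V_d,\mathfrak{S}_{n-1}}$ is the group of $(\sigma_v)_{v\in V_d}$ with $\sigma_v \in \mathfrak S_{n-1}$ for all but finitely many $v$, $\mathrm{Aut}(T_d)$ acting by $(\gamma\sigma)_v=\sigma_{\gamma^{-1}v}$; it carries the locally compact topology for which $\mathfrak{S}_{n-1}^{V_d}\rtimes\mathrm{Aut}(T_d)$ with the product topology is an open subgroup. *)

theory Defs
  imports "HOL-Analysis.Analysis"
begin

text \<open>Vertices of T_d are reduced words over the colour set Omega = {0..<d}: lists with
entries < d and no two consecutive entries equal. The vertex w is joined to w@[a]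
by an edge of colour a. Every vertex has exactly one edge of each colour, so this is
the d-regular tree with a legal colouring (unique up to colour-preserving isomorphism).\<close>

definition tree_V :: "nat \<Rightarrow> nat list set" where
  "tree_V d = {w. set w \<subseteq> {..<d} \<and> (\<forall>i. Suc i < length w \<longrightarrow> w ! i \<noteq> w ! Suc i)}"

definition tree_adj :: "nat \<Rightarrow> nat list \<Rightarrow> nat list \<Rightarrow> bool" where
  "tree_adj d x y \<longleftrightarrow> x \<in> tree_V d \<and> y \<in> tree_V d \<and>
     ((\<exists>a<d. y = x @ [a]) \<or> (\<exists>a<d. x = y @ [a]))"

definition edge_col :: "nat list \<Rightarrow> nat list \<Rightarrow> nat" where
  "edge_col x y = (if length x < length y then last y else last x)"

definition nbr :: "nat list \<Rightarrow> nat \<Rightarrow> nat list" where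
  "nbr v a = (if v \<noteq> [] \<and> last v = a then butlast v else v @ [a])"

definition Aut :: "nat \<Rightarrow> (nat list \<Rightarrow> nat list) set" where
  "Aut d = {g. bij_betw g (tree_V d) (tree_V d) \<and>
      (\<forall>x\<in>tree_V d. \<forall>y\<in>tree_V d. tree_adj d x y \<longleftrightarrow> tree_adj d (g x) (g y)) \<and>
      (\<forall>x. x \<notin> tree_V d \<longrightarrow> g x = x)}"

definition aut_inv :: "nat \<Rightarrow> (nat list \<Rightarrow> nat list) \<Rightarrow> nat list \<Rightarrow> nat list" where
  "aut_inv d g = (\<lambda>x. if x \<in> tree_V d then inv_into (tree_V d) g x else x)"

text \<open>local permutation sigma(g,v) = c|E(gv) o g o (c|E(v))^{-1}, a permutation of {..<d}
(extended by the identity outside {..<d})\<close>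
definition loc_perm :: "nat \<Rightarrow> (nat list \<Rightarrow> nat list) \<Rightarrow> nat list \<Rightarrow> nat \<Rightarrow> nat" where
  "loc_perm d g v = (\<lambda>a. if a < d then edge_col (g v) (g (nbr v a)) else a)"

definition perm_group :: "nat set \<Rightarrow> (nat \<Rightarrow> nat) set \<Rightarrow> bool" where
  "perm_group A P \<longleftrightarrow> P \<subseteq> {p. p permutes A} \<and> id \<in> P \<and>
     (\<forall>p\<in>P. \<forall>q\<in>P. p \<circ> q \<in> P) \<and> (\<forall>p\<in>P. inv p \<in> P)"

definition lcosets :: "(nat \<Rightarrow> nat) set \<Rightarrow> (nat \<Rightarrow> nat) set \<Rightarrow> (nat \<Rightarrow> nat) set set" where
  "lcosets F' F = {(\<lambda>x. f \<circ> x) ` F | f. f \<in> F'}"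

text \<open>alpha : F' -> S_n induced by the left action of F' on F'/F, transported along the
bijection beta : {..<n} -> F'/F (identity outside {..<n})\<close>
definition coset_action :: "nat \<Rightarrow> (nat \<Rightarrow> (nat \<Rightarrow> nat) set) \<Rightarrow> (nat \<Rightarrow> nat) \<Rightarrow> nat \<Rightarrow> nat" where
  "coset_action n \<beta> f = (\<lambda>i. if i < n then inv_into {..<n} \<beta> ((\<lambda>x. f \<circ> x) ` \<beta> i) else i)"

definition U_grp :: "nat \<Rightarrow> (nat \<Rightarrow> nat) set \<Rightarrow> (nat list \<Rightarrow> nat list) set" where
  "U_grp d F = {g \<in> Aut d. \<forall>v\<in>tree_V d. loc_perm d g v \<in> F}"

definition G_grp :: "nat \<Rightarrow> (nat \<Rightarrow> nat) set \<Rightarrow> (nat \<Rightarrow> nat) set \<Rightarrow> (nat list \<Rightarrow> nat list) set" where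
  "G_grp d F F' = {g \<in> Aut d. (\<forall>v\<in>tree_V d. loc_perm d g v \<in> F') \<and>
                     finite {v \<in> tree_V d. loc_perm d g v \<notin> F}}"

text \<open>Group topology on G(F,F') in which U(F), with the topology induced from the
permutation topology of Aut(T_d), is an open subgroup: basic neighbourhoods of g are
g (U(F) \<inter> pointwise stabiliser of a finite set S of vertices).\<close>
definition G_top :: "nat \<Rightarrow> (nat \<Rightarrow> nat) set \<Rightarrow> (nat \<Rightarrow> nat) set \<Rightarrow> (nat list \<Rightarrow> nat list) topology" where
  "G_top d F F' = topology (\<lambda>W. W \<subseteq> G_grp d F F' \<and>
     (\<forall>g\<in>W. \<exists>S. finite S \<and> S \<subseteq> tree_V d \<and>
         {g \<circ> u | u. u \<in> U_grp d F \<and> (\<forall>v\<in>S. u v = v)} \<subseteq> W))"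

type_synonym elt = "(nat list \<Rightarrow> nat \<Rightarrow> nat) \<times> (nat list \<Rightarrow> nat list)"

definition Gnd :: "nat \<Rightarrow> nat \<Rightarrow> elt set" where
  "Gnd n d = {(\<sigma>, \<gamma>). \<gamma> \<in> Aut d \<and> (\<forall>v\<in>tree_V d. \<sigma> v permutes {..<n}) \<and>
       (\<forall>v. v \<notin> tree_V d \<longrightarrow> \<sigma> v = id) \<and> finite {v \<in> tree_V d. \<sigma> v 0 \<noteq> 0}}"

definition Gnd0 :: "nat \<Rightarrow> nat \<Rightarrow> elt set" where
  "Gnd0 n d = {(\<sigma>, \<gamma>) \<in> Gnd n d. \<forall>v\<in>tree_V d. \<sigma> v 0 = 0}"

text \<open>semidirect product multiplication: (s,g)(t,h) = (s . g t, g h), (g t)_v = t_{g^{-1} v}\<close>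
definition Gnd_mult :: "nat \<Rightarrow> elt \<Rightarrow> elt \<Rightarrow> elt" where
  "Gnd_mult d x y = ((\<lambda>v. if v \<in> tree_V d then fst x v \<circ> fst y (aut_inv d (snd x) v) else id),
                      snd x \<circ> snd y)"

text \<open>topology: S_{n-1}^{V_d} \<rtimes> Aut(T_d) with the product topology (S_{n-1} discrete,
Aut(T_d) with the permutation topology) is an open subgroup; basic neighbourhoods of x are
x . {(t,h) in the open subgroup | t_v = id and h v = v for v in a finite set S}.\<close>
definition Gnd_top :: "nat \<Rightarrow> nat \<Rightarrow> elt topology" where
  "Gnd_top n d = topology (\<lambda>W. W \<subseteq> Gnd n d \<and>
     (\<forall>x\<in>W. \<exists>S. finite S \<and> S \<subseteq> tree_V d \<and>
        {Gnd_mult d x y | y. y \<in> Gnd0 n d \<and> (\<forall>v\<in>S. fst y v = id \<and> snd y v = v)} \<subseteq> W))"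

definition phi :: "nat \<Rightarrow> nat \<Rightarrow> (nat \<Rightarrow> (nat \<Rightarrow> nat) set) \<Rightarrow> (nat list \<Rightarrow> nat list) \<Rightarrow> elt" where
  "phi n d \<beta> \<gamma> = ((\<lambda>v. if v \<in> tree_V d
       then coset_action n \<beta> (loc_perm d \<gamma> (aut_inv d \<gamma> v)) else id), \<gamma>)"

definition cocompact :: "'a topology \<Rightarrow> ('a \<Rightarrow> 'a \<Rightarrow> 'a) \<Rightarrow> 'a set \<Rightarrow> bool" where
  "cocompact X m H \<longleftrightarrow> (\<exists>Q :: 'a set topology.
      quotient_map X Q (\<lambda>x. m x ` H) \<and> compact_space Q)"

end

theory Submission
  imports Defs
begin

text \<open>Vertices of T_d are reduced words in the colours, and an automorphism is determined by
  the image of the root together with its local permutations; conversely, local permutations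
  that agree along every edge grow into an automorphism. Since \<phi>(\<gamma>) records the cosets
  \<alpha>(\<sigma>(\<gamma>, \<gamma>\<inverse> v)), it is a homomorphism by the cocycle rule
  \<sigma>(g h, v) = \<sigma>(g, h v) \<sigma>(h, v), injective because its second coordinate is \<gamma>, and continuous
  because elements of U(F) fixing the stars of finitely many vertices land in basic neighbourhoods.
  An element (\<sigma>, \<gamma>) outside the image violates the defining condition at a single vertex,
  which is seen on the star of that vertex, so the image is closed. For cocompactness: as F'
  preserves the F-orbits, every coset of F in F' takes every value that F' takes at a given
  colour, so an element of G(F,F') with prescribed cosets as local permutations exists; hence
  every coset x \<phi>(G) meets S_{n-1}^{V_d} \<rtimes> Stab(root), the continuous image of a product of
  finite sets.\<close>

section \<open>Reduced words and walks\<close>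

lemma tree_V_Nil [simp]: "[] \<in> tree_V d"
  by (simp add: tree_V_def)

lemma tree_V_snoc:
  "w @ [a] \<in> tree_V d \<longleftrightarrow> w \<in> tree_V d \<and> a < d \<and> (w \<noteq> [] \<longrightarrow> last w \<noteq> a)"
proof -
  have "(\<forall>i. Suc i < length (w @ [a]) \<longrightarrow> (w @ [a]) ! i \<noteq> (w @ [a]) ! Suc i) \<longleftrightarrow>
        (\<forall>i. Suc i < length w \<longrightarrow> w ! i \<noteq> w ! Suc i) \<and> (w \<noteq> [] \<longrightarrow> last w \<noteq> a)"
    (is "?L \<longleftrightarrow> ?R")
  proof
    assume L: ?L
    show ?R
    proof
      show "\<forall>i. Suc i < length w \<longrightarrow> w ! i \<noteq> w ! Suc i"
        using L by (metis Suc_lessD length_append_singleton less_SucI nth_append_left)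
      show "w \<noteq> [] \<longrightarrow> last w \<noteq> a"
        using L[rule_format, of "length w - 1"] by (auto simp: nth_append last_conv_nth)
    qed
  next
    assume R: ?R
    show ?L
    proof (intro allI impI)
      fix i assume i: "Suc i < length (w @ [a])"
      show "(w @ [a]) ! i \<noteq> (w @ [a]) ! Suc i"
      proof (cases "Suc i < length w")
        case True then show ?thesis using R by (simp add: nth_append)
      next
        case False
        then have "i = length w - 1" "w \<noteq> []" using i by auto
        then show ?thesis using R by (auto simp: nth_append last_conv_nth)
      qed
    qed
  qed
  then show ?thesis by (auto simp: tree_V_def)
qed

lemma tree_V_butlast: "w \<in> tree_V d \<Longrightarrow> butlast w \<in> tree_V d"
  by (cases w rule: rev_cases) (auto simp: tree_V_snoc)

lemma tree_V_appendD: "w @ u \<in> tree_V d \<Longrightarrow> w \<in> tree_V d"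
  by (induction u rule: rev_induct) (auto simp: tree_V_snoc simp flip: append_assoc)

lemma tree_V_subset: "w \<in> tree_V d \<Longrightarrow> set w \<subseteq> {..<d}"
  by (auto simp: tree_V_def)

lemma rev_in_tree_V: "w \<in> tree_V d \<Longrightarrow> rev w \<in> tree_V d"
proof -
  assume w: "w \<in> tree_V d"
  have "rev w ! i \<noteq> rev w ! Suc i" if "Suc i < length w" for i
  proof -
    have "w ! (length w - Suc (Suc i)) \<noteq> w ! Suc (length w - Suc (Suc i))"
      using w that by (simp add: tree_V_def)
    moreover have "Suc (length w - Suc (Suc i)) = length w - Suc i" using that by simp
    ultimately show ?thesis using that by (simp add: rev_nth)
  qed
  then show ?thesis using w by (auto simp: tree_V_def)
qed

lemma nbr_in_tree_V: "v \<in> tree_V d \<Longrightarrow> a < d \<Longrightarrow> nbr v a \<in> tree_V d"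
  by (auto simp: nbr_def tree_V_butlast tree_V_snoc)

lemma nbr_nbr: "v \<in> tree_V d \<Longrightarrow> a < d \<Longrightarrow> nbr (nbr v a) a = v"
  by (cases v rule: rev_cases) (auto simp: nbr_def tree_V_snoc butlast_append)

lemma edge_col_nbr: "edge_col v (nbr v a) = a"
  by (cases v rule: rev_cases) (auto simp: nbr_def edge_col_def)

lemma edge_col_nbr_left: "edge_col (nbr v a) v = a"
  by (cases v rule: rev_cases) (auto simp: nbr_def edge_col_def)

lemma nbr_eq_nbr_iff: "nbr v a = nbr v b \<longleftrightarrow> a = b"
  by (metis edge_col_nbr)

lemma tree_adj_iff_nbr: "tree_adj d x y \<longleftrightarrow> x \<in> tree_V d \<and> (\<exists>a<d. y = nbr x a)"
proof
  assume "tree_adj d x y"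
  then show "x \<in> tree_V d \<and> (\<exists>a<d. y = nbr x a)"
    by (auto simp: tree_adj_def nbr_def tree_V_snoc)
next
  assume "x \<in> tree_V d \<and> (\<exists>a<d. y = nbr x a)"
  then obtain a where "x \<in> tree_V d" "a < d" "y = nbr x a" by auto
  moreover have "y \<in> tree_V d" using calculation nbr_in_tree_V by simp
  ultimately show "tree_adj d x y"
    by (cases x rule: rev_cases) (auto simp: tree_adj_def nbr_def)
qed

definition walk :: "nat list \<Rightarrow> nat list \<Rightarrow> nat list" where
  "walk v cs = foldl nbr v cs"

lemma walk_Nil [simp]: "walk v [] = v"
  and walk_Cons [simp]: "walk v (c # cs) = walk (nbr v c) cs"
  and walk_snoc [simp]: "walk v (cs @ [c]) = nbr (walk v cs) c"
  by (simp_all add: walk_def)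

lemma walk_in_tree_V: "v \<in> tree_V d \<Longrightarrow> set cs \<subseteq> {..<d} \<Longrightarrow> walk v cs \<in> tree_V d"
  by (induction cs arbitrary: v) (auto simp: nbr_in_tree_V)

lemma walk_rev_self: "v \<in> tree_V d \<Longrightarrow> walk v (rev v) = []"
  by (induction v rule: rev_induct) (simp_all add: nbr_def tree_V_snoc)

lemma walk_Nil_self: "v \<in> tree_V d \<Longrightarrow> walk [] v = v"
  by (induction v rule: rev_induct) (auto simp: nbr_def tree_V_snoc)

text \<open>The vertices form the free product of d copies of Z/2, walk u w is the product u w, and
  walk_walk is associativity; this is all that is needed about geodesics in the tree.\<close>

lemma walk_nbr:
  assumes "u \<in> tree_V d" "w \<in> tree_V d" "c < d"
  shows "walk u (nbr w c) = nbr (walk u w) c"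
proof (cases "w \<noteq> [] \<and> last w = c")
  case True
  then obtain w' where w': "w = w' @ [c]" by (metis append_butlast_last_id)
  then have "walk u w' \<in> tree_V d"
    using assms(1,2) tree_V_appendD tree_V_subset walk_in_tree_V by blast
  then show ?thesis using w' assms(3) by (simp add: nbr_nbr) (simp add: nbr_def)
next
  case False
  then have "nbr w c = w @ [c]" by (auto simp: nbr_def)
  then show ?thesis by simp
qed

lemma walk_walk:
  assumes "u \<in> tree_V d" "w \<in> tree_V d" "set cs \<subseteq> {..<d}"
  shows "walk u (walk w cs) = walk (walk u w) cs"
  using assms(2,3)
proof (induction cs arbitrary: w)
  case (Cons c cs)
  then show ?case by (simp add: walk_nbr[OF assms(1)] nbr_in_tree_V)
qed simp

lemma walk_connects:
  assumes x: "x \<in> tree_V d" and y: "y \<in> tree_V d"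
  shows "walk (rev x) y \<in> tree_V d" "walk x (walk (rev x) y) = y"
proof -
  have rx: "rev x \<in> tree_V d" using rev_in_tree_V[OF x] .
  show "walk (rev x) y \<in> tree_V d" using walk_in_tree_V[OF rx tree_V_subset[OF y]] .
  have "walk x (rev x) = []" using walk_rev_self[OF x] .
  then show "walk x (walk (rev x) y) = y"
    using walk_walk[OF x rx tree_V_subset[OF y]] walk_Nil_self[OF y] by simp
qed

lemma walk_eq_self_imp_Nil:
  assumes v: "v \<in> tree_V d" and cs: "cs \<in> tree_V d" and loop: "walk v cs = v"
  shows "cs = []"
proof -
  have rv: "rev v \<in> tree_V d" using rev_in_tree_V[OF v] .
  have home: "walk (rev v) v = []" using walk_rev_self[OF rv] by simp
  have "cs = walk (walk (rev v) v) cs" using home walk_Nil_self[OF cs] by simp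
  also have "\<dots> = walk (rev v) (walk v cs)" using walk_walk[OF rv v tree_V_subset[OF cs]] by simp
  also have "\<dots> = []" using loop home by simp
  finally show ?thesis .
qed

section \<open>Local permutations and automorphisms\<close>

lemma loc_perm_eqI:
  assumes "p permutes {..<d}" "\<forall>a<d. g (nbr w a) = nbr (g w) (p a)"
  shows "loc_perm d g w = p"
  using assms by (auto simp: fun_eq_iff loc_perm_def edge_col_nbr permutes_not_in)

lemma loc_perm_eq_id:
  assumes "g v = v" "\<forall>a<d. g (nbr v a) = nbr v a"
  shows "loc_perm d g v = id"
  using assms by (auto simp: fun_eq_iff loc_perm_def edge_col_nbr)

lemma loc_perm_nbr_same_colour:
  assumes "g (nbr w a) = nbr (g w) (loc_perm d g w a)" "w \<in> tree_V d" "a < d"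
  shows "loc_perm d g (nbr w a) a = loc_perm d g w a"
proof -
  have "loc_perm d g (nbr w a) a = edge_col (g (nbr w a)) (g w)"
    using assms(2,3) by (simp add: loc_perm_def nbr_nbr)
  also have "\<dots> = loc_perm d g w a" unfolding assms(1) by (rule edge_col_nbr_left)
  finally show ?thesis .
qed

definition local_iso :: "nat \<Rightarrow> (nat list \<Rightarrow> nat list) \<Rightarrow> bool" where
  "local_iso d g \<longleftrightarrow> (\<forall>w\<in>tree_V d. g w \<in> tree_V d \<and> loc_perm d g w permutes {..<d} \<and>
      (\<forall>a<d. g (nbr w a) = nbr (g w) (loc_perm d g w a)))"

lemma local_isoD:
  assumes "local_iso d g" "w \<in> tree_V d"
  shows "g w \<in> tree_V d" "loc_perm d g w permutes {..<d}"
    "\<And>a. a < d \<Longrightarrow> g (nbr w a) = nbr (g w) (loc_perm d g w a)"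
  using assms by (auto simp: local_iso_def)

lemma local_iso_walk:
  assumes g: "local_iso d g" and x: "x \<in> tree_V d" and cs: "cs \<in> tree_V d"
  shows "\<exists>cs'\<in>tree_V d. length cs' = length cs \<and> g (walk x cs) = walk (g x) cs' \<and>
           (cs \<noteq> [] \<longrightarrow> last cs' = loc_perm d g (walk x cs) (last cs))"
  using cs
proof (induction cs rule: rev_induct)
  case (snoc c cs)
  have cs: "cs \<in> tree_V d" "c < d" "cs \<noteq> [] \<longrightarrow> last cs \<noteq> c"
    using snoc.prems by (auto simp: tree_V_snoc)
  obtain cs' where cs': "cs' \<in> tree_V d" "length cs' = length cs" "g (walk x cs) = walk (g x) cs'"
    "cs \<noteq> [] \<longrightarrow> last cs' = loc_perm d g (walk x cs) (last cs)"
    using snoc.IH[OF cs(1)] by blast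
  let ?w = "walk x cs" and ?p = "loc_perm d g (walk x cs)"
  have w: "?w \<in> tree_V d" using walk_in_tree_V[OF x tree_V_subset[OF cs(1)]] .
  note gw = local_isoD[OF g w]
  have pc: "?p c < d" using permutes_in_image[OF gw(2)] cs(2) by simp
  have "cs' \<noteq> [] \<longrightarrow> last cs' \<noteq> ?p c"
  proof
    assume "cs' \<noteq> []"
    then have "cs \<noteq> []" "last cs' = ?p (last cs)" using cs' by auto
    moreover have "last cs < d"
      using \<open>cs \<noteq> []\<close> last_in_set tree_V_subset[OF cs(1)] by fastforce
    ultimately show "last cs' \<noteq> ?p c"
      using cs permutes_inj_on[OF gw(2)] by (auto dest: inj_onD)
  qed
  then have "cs' @ [?p c] \<in> tree_V d" using cs' pc by (simp add: tree_V_snoc)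
  moreover have "last (cs' @ [?p c]) = loc_perm d g (walk x (cs @ [c])) (last (cs @ [c]))"
    using loc_perm_nbr_same_colour[OF gw(3)[OF cs(2)] w cs(2)] by simp
  ultimately show ?case using cs' gw(3)[OF cs(2)]
    by (intro bexI[of _ "cs' @ [?p c]"]) auto
qed simp

lemma local_iso_inj_on:
  assumes g: "local_iso d g"
  shows "inj_on g (tree_V d)"
proof (rule inj_onI)
  fix x y assume x: "x \<in> tree_V d" and y: "y \<in> tree_V d" and eq: "g x = g y"
  define cs where "cs = walk (rev x) y"
  have cs: "cs \<in> tree_V d" "walk x cs = y" using walk_connects[OF x y] by (simp_all add: cs_def)
  obtain cs' where cs': "cs' \<in> tree_V d" "length cs' = length cs" "g (walk x cs) = walk (g x) cs'"
    using local_iso_walk[OF g x cs(1)] by blast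
  have "cs' = []" using walk_eq_self_imp_Nil[OF local_isoD(1)[OF g x] cs'(1)] cs'(3) cs(2) eq by simp
  then show "x = y" using cs cs'(2) by simp
qed

lemma local_iso_image:
  assumes g: "local_iso d g"
  shows "g ` tree_V d = tree_V d"
proof
  show "g ` tree_V d \<subseteq> tree_V d" using local_isoD(1)[OF g] by blast
  have reach: "walk (g x) cs \<in> g ` tree_V d" if "x \<in> tree_V d" "set cs \<subseteq> {..<d}" for x cs
    using that
  proof (induction cs arbitrary: x)
    case (Cons c cs)
    note gx = local_isoD[OF g Cons.prems(1)]
    let ?b = "inv (loc_perm d g x) c"
    have b: "?b < d" using permutes_in_image[OF permutes_inv[OF gx(2)]] Cons.prems(2) by simp
    have "nbr (g x) c = g (nbr x ?b)" using gx(3)[OF b] permutes_inverses(1)[OF gx(2)] by simp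
    then show ?case using Cons nbr_in_tree_V[OF Cons.prems(1) b] by simp
  qed simp
  show "tree_V d \<subseteq> g ` tree_V d"
  proof
    fix y assume y: "y \<in> tree_V d"
    have g0: "g [] \<in> tree_V d" using local_isoD(1)[OF g tree_V_Nil] .
    show "y \<in> g ` tree_V d"
      using reach[OF tree_V_Nil tree_V_subset[OF walk_connects(1)[OF g0 y]]] walk_connects(2)[OF g0 y]
      by simp
  qed
qed

lemma local_iso_in_Aut:
  assumes g: "local_iso d g" and outside: "\<forall>x. x \<notin> tree_V d \<longrightarrow> g x = x"
  shows "g \<in> Aut d"
proof -
  have inj: "inj_on g (tree_V d)" by (rule local_iso_inj_on[OF g])
  have "tree_adj d x y \<longleftrightarrow> tree_adj d (g x) (g y)" if x: "x \<in> tree_V d" and y: "y \<in> tree_V d" for x y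
  proof -
    note gx = local_isoD[OF g x]
    have "(\<exists>a<d. y = nbr x a) \<longleftrightarrow> (\<exists>b<d. g y = nbr (g x) b)"
    proof
      assume "\<exists>a<d. y = nbr x a"
      then show "\<exists>b<d. g y = nbr (g x) b" using gx permutes_in_image[OF gx(2)] by auto
    next
      assume "\<exists>b<d. g y = nbr (g x) b"
      then obtain b where b: "b < d" "g y = nbr (g x) b" by blast
      let ?a = "inv (loc_perm d g x) b"
      have a: "?a < d" using permutes_in_image[OF permutes_inv[OF gx(2)]] b(1) by simp
      have "g y = g (nbr x ?a)" using b gx(3)[OF a] permutes_inverses(1)[OF gx(2)] by simp
      then have "y = nbr x ?a" using inj y nbr_in_tree_V[OF x a] by (auto dest: inj_onD)
      then show "\<exists>a<d. y = nbr x a" using a by blast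
    qed
    then show ?thesis using x gx(1) by (simp add: tree_adj_iff_nbr)
  qed
  then show ?thesis
    using inj local_iso_image[OF g] outside by (auto simp: Aut_def bij_betw_def)
qed

lemma Aut_tree_V: "g \<in> Aut d \<Longrightarrow> v \<in> tree_V d \<Longrightarrow> g v \<in> tree_V d"
  by (auto simp: Aut_def bij_betw_def)

lemma Aut_outside: "g \<in> Aut d \<Longrightarrow> v \<notin> tree_V d \<Longrightarrow> g v = v"
  by (auto simp: Aut_def)

lemma Aut_inj_on: "g \<in> Aut d \<Longrightarrow> inj_on g (tree_V d)"
  by (auto simp: Aut_def bij_betw_def)

lemma Aut_adj_iff:
  "g \<in> Aut d \<Longrightarrow> x \<in> tree_V d \<Longrightarrow> y \<in> tree_V d \<Longrightarrow> tree_adj d (g x) (g y) \<longleftrightarrow> tree_adj d x y"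
  unfolding Aut_def by blast

lemma Aut_nbr:
  assumes g: "g \<in> Aut d" and v: "v \<in> tree_V d" and a: "a < d"
  shows "g (nbr v a) = nbr (g v) (loc_perm d g v a)" "loc_perm d g v a < d"
proof -
  have "tree_adj d v (nbr v a)" using v a by (auto simp: tree_adj_iff_nbr)
  then have "tree_adj d (g v) (g (nbr v a))"
    using Aut_adj_iff[OF g v nbr_in_tree_V[OF v a]] by simp
  then obtain b where b: "b < d" "g (nbr v a) = nbr (g v) b" by (auto simp: tree_adj_iff_nbr)
  moreover have "loc_perm d g v a = b" using b a by (simp add: loc_perm_def edge_col_nbr)
  ultimately show "g (nbr v a) = nbr (g v) (loc_perm d g v a)" "loc_perm d g v a < d" by simp_all
qed

lemma loc_perm_permutes:
  assumes g: "g \<in> Aut d" and v: "v \<in> tree_V d"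
  shows "loc_perm d g v permutes {..<d}"
proof (rule inj_imp_permutes)
  show "inj_on (loc_perm d g v) {..<d}"
  proof (rule inj_onI)
    fix a b assume a: "a \<in> {..<d}" and b: "b \<in> {..<d}" and eq: "loc_perm d g v a = loc_perm d g v b"
    have "g (nbr v a) = g (nbr v b)" using Aut_nbr(1)[OF g v] a b eq by simp
    then have "nbr v a = nbr v b" using Aut_inj_on[OF g] nbr_in_tree_V[OF v] a b by (auto dest: inj_onD)
    then show "a = b" by (simp add: nbr_eq_nbr_iff)
  qed
  show "loc_perm d g v a \<in> {..<d}" if "a \<in> {..<d}" for a using Aut_nbr(2)[OF g v] that by simp
qed (auto simp: loc_perm_def)

lemma Aut_comp:
  assumes g: "g \<in> Aut d" and h: "h \<in> Aut d"
  shows "g \<circ> h \<in> Aut d"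
proof -
  have "bij_betw (g \<circ> h) (tree_V d) (tree_V d)"
    using g h unfolding Aut_def by (blast intro: bij_betw_trans)
  moreover have "tree_adj d x y \<longleftrightarrow> tree_adj d (g (h x)) (g (h y))"
    if "x \<in> tree_V d" "y \<in> tree_V d" for x y
    using that Aut_adj_iff[OF g Aut_tree_V[OF h] Aut_tree_V[OF h]] Aut_adj_iff[OF h] by simp
  moreover have "\<forall>x. x \<notin> tree_V d \<longrightarrow> g (h x) = x" using g h by (simp add: Aut_outside)
  ultimately show ?thesis unfolding Aut_def mem_Collect_eq comp_apply by blast
qed

lemma loc_perm_comp:
  assumes g: "g \<in> Aut d" and h: "h \<in> Aut d" and w: "w \<in> tree_V d"
  shows "loc_perm d (g \<circ> h) w = loc_perm d g (h w) \<circ> loc_perm d h w"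
proof (rule loc_perm_eqI)
  show "loc_perm d g (h w) \<circ> loc_perm d h w permutes {..<d}"
    using loc_perm_permutes[OF g Aut_tree_V[OF h w]] loc_perm_permutes[OF h w]
    by (rule permutes_compose[rotated])
  show "\<forall>a<d. (g \<circ> h) (nbr w a) = nbr ((g \<circ> h) w) ((loc_perm d g (h w) \<circ> loc_perm d h w) a)"
    using Aut_nbr[OF h w] Aut_nbr(1)[OF g Aut_tree_V[OF h w]] by simp
qed

lemma aut_inv_in_tree_V: "g \<in> Aut d \<Longrightarrow> v \<in> tree_V d \<Longrightarrow> aut_inv d g v \<in> tree_V d"
  and Aut_aut_inv: "g \<in> Aut d \<Longrightarrow> v \<in> tree_V d \<Longrightarrow> g (aut_inv d g v) = v"
  and aut_inv_Aut: "g \<in> Aut d \<Longrightarrow> v \<in> tree_V d \<Longrightarrow> aut_inv d g (g v) = v"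
  by (auto simp: aut_inv_def Aut_def bij_betw_def inv_into_into f_inv_into_f)

lemma aut_inv_in_Aut:
  assumes g: "g \<in> Aut d"
  shows "aut_inv d g \<in> Aut d"
proof -
  have "bij_betw (inv_into (tree_V d) g) (tree_V d) (tree_V d)"
    using g unfolding Aut_def by (blast intro: bij_betw_inv_into)
  then have bij: "bij_betw (aut_inv d g) (tree_V d) (tree_V d)"
    by (rule bij_betw_cong[THEN iffD1, rotated]) (simp add: aut_inv_def)
  have "tree_adj d x y \<longleftrightarrow> tree_adj d (aut_inv d g x) (aut_inv d g y)"
    if x: "x \<in> tree_V d" and y: "y \<in> tree_V d" for x y
  proof -
    have "tree_adj d (g (aut_inv d g x)) (g (aut_inv d g y)) \<longleftrightarrow>
          tree_adj d (aut_inv d g x) (aut_inv d g y)"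
      using Aut_adj_iff[OF g aut_inv_in_tree_V[OF g x] aut_inv_in_tree_V[OF g y]] .
    then show ?thesis using Aut_aut_inv[OF g x] Aut_aut_inv[OF g y] by simp
  qed
  moreover have "\<forall>x. x \<notin> tree_V d \<longrightarrow> aut_inv d g x = x" by (simp add: aut_inv_def)
  ultimately show ?thesis using bij unfolding Aut_def by blast
qed

lemma comp_aut_inv:
  assumes g: "g \<in> Aut d"
  shows "g \<circ> aut_inv d g = id" "aut_inv d g \<circ> g = id"
proof -
  have "g (aut_inv d g x) = x \<and> aut_inv d g (g x) = x" for x
  proof (cases "x \<in> tree_V d")
    case True then show ?thesis using Aut_aut_inv[OF g] aut_inv_Aut[OF g] by simp
  next
    case False then show ?thesis using Aut_outside[OF g] by (simp add: aut_inv_def)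
  qed
  then show "g \<circ> aut_inv d g = id" "aut_inv d g \<circ> g = id" by (simp_all add: fun_eq_iff)
qed

lemma aut_inv_comp:
  assumes g: "g \<in> Aut d" and h: "h \<in> Aut d" and v: "v \<in> tree_V d"
  shows "aut_inv d (g \<circ> h) v = aut_inv d h (aut_inv d g v)"
proof -
  have "aut_inv d h (aut_inv d g v) \<in> tree_V d" "(g \<circ> h) (aut_inv d h (aut_inv d g v)) = v"
    using aut_inv_in_tree_V[OF h aut_inv_in_tree_V[OF g v]] Aut_aut_inv[OF h aut_inv_in_tree_V[OF g v]]
      Aut_aut_inv[OF g v] by simp_all
  then show ?thesis using aut_inv_Aut[OF Aut_comp[OF g h]] by metis
qed

lemma loc_perm_aut_inv:
  assumes g: "g \<in> Aut d" and w: "w \<in> tree_V d"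
  shows "loc_perm d (aut_inv d g) w = inv (loc_perm d g (aut_inv d g w))"
proof -
  let ?u = "aut_inv d g w"
  have "loc_perm d g ?u \<circ> loc_perm d (aut_inv d g) w = loc_perm d id w"
    using loc_perm_comp[OF g aut_inv_in_Aut[OF g] w] comp_aut_inv(1)[OF g] by simp
  also have "\<dots> = id" by (rule loc_perm_eq_id) simp_all
  finally have "inv (loc_perm d g ?u) \<circ> (loc_perm d g ?u \<circ> loc_perm d (aut_inv d g) w) =
      inv (loc_perm d g ?u)" by simp
  then show ?thesis using permutes_inv_o(2)[OF loc_perm_permutes[OF g aut_inv_in_tree_V[OF g w]]]
    by (simp add: comp_assoc[symmetric])
qed

lemma Aut_eqI:
  assumes g: "g \<in> Aut d" and h: "h \<in> Aut d" and root: "g [] = h []"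
    and loc: "\<forall>w\<in>tree_V d. loc_perm d g w = loc_perm d h w"
  shows "g = h"
proof
  fix x show "g x = h x"
  proof (cases "x \<in> tree_V d")
    case True then show ?thesis
    proof (induction x rule: rev_induct)
      case (snoc a x)
      have x: "x \<in> tree_V d" "a < d" "x \<noteq> [] \<longrightarrow> last x \<noteq> a" using snoc.prems by (auto simp: tree_V_snoc)
      have "nbr x a = x @ [a]" using x by (auto simp: nbr_def)
      then show ?case using Aut_nbr(1)[OF g x(1,2)] Aut_nbr(1)[OF h x(1,2)] snoc.IH[OF x(1)] loc x(1) by simp
    qed (simp add: root)
  qed (simp add: Aut_outside[OF g] Aut_outside[OF h])
qed

section \<open>Growing automorphisms from local data\<close>

text \<open>Growing an automorphism outward from the root: build r0 R p0 (rev w) is the pair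
  (image of w, local permutation at w). The root goes to r0 with local permutation p0; the edge
  of colour a at w must go to the edge of colour p a at the image (p the local permutation at w),
  and the rule R picks the local permutation at the new vertex among those sending a to p a.\<close>

fun build :: "nat list \<Rightarrow> (nat list \<Rightarrow> nat list \<Rightarrow> nat \<Rightarrow> nat \<Rightarrow> nat \<Rightarrow> nat) \<Rightarrow> (nat \<Rightarrow> nat) \<Rightarrow>
    nat list \<Rightarrow> nat list \<times> (nat \<Rightarrow> nat)" where
  "build r0 R p0 [] = (r0, p0)"
| "build r0 R p0 (a # ws) =
    (let x = build r0 R p0 ws; u = nbr (fst x) (snd x a) in (u, R (rev ws @ [a]) u a (snd x a)))"

definition build_aut :: "nat \<Rightarrow> nat list \<Rightarrow> (nat list \<Rightarrow> nat list \<Rightarrow> nat \<Rightarrow> nat \<Rightarrow> nat \<Rightarrow> nat) \<Rightarrow>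
    (nat \<Rightarrow> nat) \<Rightarrow> nat list \<Rightarrow> nat list" where
  "build_aut d r0 R p0 w = (if w \<in> tree_V d then fst (build r0 R p0 (rev w)) else w)"

definition build_perm :: "nat list \<Rightarrow> (nat list \<Rightarrow> nat list \<Rightarrow> nat \<Rightarrow> nat \<Rightarrow> nat \<Rightarrow> nat) \<Rightarrow>
    (nat \<Rightarrow> nat) \<Rightarrow> nat list \<Rightarrow> nat \<Rightarrow> nat" where
  "build_perm r0 R p0 w = snd (build r0 R p0 (rev w))"

lemma build_snoc:
  "build r0 R p0 (rev (w @ [a])) =
    (nbr (fst (build r0 R p0 (rev w))) (build_perm r0 R p0 w a),
     R (w @ [a]) (nbr (fst (build r0 R p0 (rev w))) (build_perm r0 R p0 w a)) a (build_perm r0 R p0 w a))"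
  by (simp add: build_perm_def Let_def)

lemma build_perm_snoc:
  "build_perm r0 R p0 (w @ [a]) =
    R (w @ [a]) (nbr (fst (build r0 R p0 (rev w))) (build_perm r0 R p0 w a)) a (build_perm r0 R p0 w a)"
  using build_snoc[of r0 R p0 w a] by (simp add: build_perm_def[of _ _ _ "w @ [a]"])

lemma build_cong:
  assumes "\<forall>k\<le>length w. R1 (take k w) = R2 (take k w)"
  shows "build r0 R1 p0 (rev w) = build r0 R2 p0 (rev w)"
  using assms
proof (induction w rule: rev_induct)
  case (snoc a w)
  have "\<forall>k\<le>length w. R1 (take k w) = R2 (take k w)"
  proof (intro allI impI)
    fix k assume "k \<le> length w"
    then show "R1 (take k w) = R2 (take k w)" using snoc.prems[rule_format, of k] by simp
  qed
  then have "build r0 R1 p0 (rev w) = build r0 R2 p0 (rev w)" by (rule snoc.IH)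
  moreover have "R1 (w @ [a]) = R2 (w @ [a])"
    using snoc.prems[rule_format, of "length (w @ [a])"] by simp
  ultimately show ?case by (simp add: build_snoc build_perm_def)
qed simp

locale build_data =
  fixes d :: nat and r0 :: "nat list" and Q :: "nat list \<Rightarrow> (nat \<Rightarrow> nat) set"
    and R :: "nat list \<Rightarrow> nat list \<Rightarrow> nat \<Rightarrow> nat \<Rightarrow> nat \<Rightarrow> nat" and p0 :: "nat \<Rightarrow> nat"
  assumes root: "r0 \<in> tree_V d"
    and Q_permutes: "\<And>u. u \<in> tree_V d \<Longrightarrow> Q u \<subseteq> {p. p permutes {..<d}}"
    and p0: "p0 \<in> Q r0"
    and R: "\<And>w u u' a p. w \<in> tree_V d \<Longrightarrow> u \<in> tree_V d \<Longrightarrow> u' \<in> tree_V d \<Longrightarrow> a < d \<Longrightarrow>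
      p \<in> Q u' \<Longrightarrow> R w u a (p a) \<in> Q u \<and> R w u a (p a) a = p a"
begin

lemma build_invariant:
  "w \<in> tree_V d \<Longrightarrow> build_aut d r0 R p0 w \<in> tree_V d \<and> build_perm r0 R p0 w \<in> Q (build_aut d r0 R p0 w)"
proof (induction w rule: rev_induct)
  case (snoc a w)
  let ?g = "build_aut d r0 R p0" and ?P = "build_perm r0 R p0"
  have w: "w \<in> tree_V d" "a < d" using snoc.prems by (auto simp: tree_V_snoc)
  have IH: "?g w \<in> tree_V d" "?P w \<in> Q (?g w)" using snoc.IH[OF w(1)] by auto
  have "?P w a < d" using Q_permutes[OF IH(1)] IH(2) w(2) permutes_in_image by fastforce
  then have u: "nbr (?g w) (?P w a) \<in> tree_V d" using nbr_in_tree_V[OF IH(1)] by blast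
  show ?case
    using snoc.prems w(1) u R[OF snoc.prems u IH(1) w(2) IH(2)]
    by (simp add: build_aut_def build_perm_def Let_def)
qed (simp add: build_aut_def build_perm_def root p0)

lemma build_perm_permutes: "w \<in> tree_V d \<Longrightarrow> build_perm r0 R p0 w permutes {..<d}"
  using build_invariant Q_permutes by blast

lemma build_aut_nbr:
  assumes w: "w \<in> tree_V d" and a: "a < d"
  shows "build_aut d r0 R p0 (nbr w a) = nbr (build_aut d r0 R p0 w) (build_perm r0 R p0 w a)"
proof (cases "w \<noteq> [] \<and> last w = a")
  case False
  then have "nbr w a = w @ [a]" "w @ [a] \<in> tree_V d"
    using w a by (auto simp: nbr_def tree_V_snoc)
  then show ?thesis using w by (simp add: build_aut_def build_perm_def Let_def)
next
  case True
  let ?g = "build_aut d r0 R p0" and ?P = "build_perm r0 R p0"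
  obtain w' where w': "w = w' @ [a]" using True by (metis append_butlast_last_id)
  have w'V: "w' \<in> tree_V d" using w unfolding w' by (rule tree_V_appendD)
  note inv = build_invariant[OF w] build_invariant[OF w'V]
  have pa: "?P w' a < d" using permutes_in_image[OF build_perm_permutes[OF w'V], of a] a by simp
  have gw: "?g w = nbr (?g w') (?P w' a)"
    using w w' w'V by (simp add: build_aut_def build_perm_def Let_def)
  have "?P w = R w (?g w) a (?P w' a)"
    using w w' w'V by (simp add: build_aut_def build_perm_def Let_def)
  then have "?P w a = ?P w' a" using R[OF w conjunct1[OF inv(1)] conjunct1[OF inv(2)] a conjunct2[OF inv(2)]]
    by simp
  then show ?thesis using gw w' nbr_nbr[OF conjunct1[OF inv(2)] pa] by (simp add: nbr_def)
qed

lemma loc_perm_build_aut: "w \<in> tree_V d \<Longrightarrow> loc_perm d (build_aut d r0 R p0) w = build_perm r0 R p0 w"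
  using loc_perm_eqI[OF build_perm_permutes] build_aut_nbr by blast

lemma build_aut_in_Aut: "build_aut d r0 R p0 \<in> Aut d"
proof (rule local_iso_in_Aut)
  show "local_iso d (build_aut d r0 R p0)"
    unfolding local_iso_def using build_invariant loc_perm_build_aut build_perm_permutes build_aut_nbr
    by simp
qed (simp add: build_aut_def)

lemma build_aut_Nil: "build_aut d r0 R p0 [] = r0"
  by (simp add: build_aut_def)

lemma build_perm_in: "w \<in> tree_V d \<Longrightarrow> build_perm r0 R p0 w \<in> Q (build_aut d r0 R p0 w)"
  using build_invariant by blast

end

section \<open>The coset action\<close>

lemma perm_groupD:
  assumes "perm_group A P"
  shows "\<And>p. p \<in> P \<Longrightarrow> p permutes A" "id \<in> P" "\<And>p q. p \<in> P \<Longrightarrow> q \<in> P \<Longrightarrow> p \<circ> q \<in> P"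
    "\<And>p. p \<in> P \<Longrightarrow> inv p \<in> P"
  using assms by (auto simp: perm_group_def)

lemma image_comp_left_mult: "(\<lambda>x. f \<circ> x) ` ((\<lambda>x. g \<circ> x) ` A) = (\<lambda>x. (f \<circ> g) \<circ> x) ` A"
  by (auto simp: image_image comp_assoc)

locale coset_enum =
  fixes d n :: nat and F F' :: "(nat \<Rightarrow> nat) set" and \<beta> :: "nat \<Rightarrow> (nat \<Rightarrow> nat) set"
  assumes F: "perm_group {..<d} F" and F': "perm_group {..<d} F'" and F_sub: "F \<subseteq> F'"
    and n_def: "n = card (lcosets F' F)"
    and \<beta>: "bij_betw \<beta> {..<n} (lcosets F' F)" and \<beta>_0: "\<beta> 0 = F"
begin

abbreviation "\<alpha> \<equiv> coset_action n \<beta>"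

lemmas F_permutes = perm_groupD(1)[OF F] and id_in_F = perm_groupD(2)[OF F]
  and F_comp = perm_groupD(3)[OF F] and F_inv = perm_groupD(4)[OF F]
lemmas F'_permutes = perm_groupD(1)[OF F'] and id_in_F' = perm_groupD(2)[OF F']
  and F'_comp = perm_groupD(3)[OF F'] and F'_inv = perm_groupD(4)[OF F']

lemma left_mult_F: "f \<in> F \<Longrightarrow> (\<lambda>x. f \<circ> x) ` F = F"
proof
  assume f: "f \<in> F"
  show "(\<lambda>x. f \<circ> x) ` F \<subseteq> F" using f F_comp by auto
  show "F \<subseteq> (\<lambda>x. f \<circ> x) ` F"
  proof
    fix x assume x: "x \<in> F"
    have "f \<circ> (inv f \<circ> x) = x"
      using permutes_inv_o(1)[OF F_permutes[OF f]] by (simp add: comp_assoc[symmetric])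
    then show "x \<in> (\<lambda>x. f \<circ> x) ` F" using F_comp[OF F_inv[OF f] x] by (metis image_eqI)
  qed
qed

lemma left_mult_lcosets: "f \<in> F' \<Longrightarrow> C \<in> lcosets F' F \<Longrightarrow> (\<lambda>x. f \<circ> x) ` C \<in> lcosets F' F"
  unfolding lcosets_def using image_comp_left_mult F'_comp by blast

lemma left_mult_inj: "f \<in> F' \<Longrightarrow> (\<lambda>x. f \<circ> x) ` A = (\<lambda>x. f \<circ> x) ` B \<Longrightarrow> A = B"
proof -
  assume f: "f \<in> F'" and e: "(\<lambda>x. f \<circ> x) ` A = (\<lambda>x. f \<circ> x) ` B"
  have "(\<lambda>x. inv f \<circ> x) ` ((\<lambda>x. f \<circ> x) ` A) = (\<lambda>x. inv f \<circ> x) ` ((\<lambda>x. f \<circ> x) ` B)" using e by simp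
  then show "A = B" using permutes_inv_o(2)[OF F'_permutes[OF f]] by (simp add: image_comp_left_mult)
qed

lemma lcoset_subset: "C \<in> lcosets F' F \<Longrightarrow> C \<subseteq> F'"
  unfolding lcosets_def using F_sub F'_comp by auto

lemma lcoset_eq_left_mult: "C \<in> lcosets F' F \<Longrightarrow> f \<in> C \<Longrightarrow> (\<lambda>x. f \<circ> x) ` F = C"
proof -
  assume C: "C \<in> lcosets F' F" and f: "f \<in> C"
  then obtain c where c: "c \<in> F'" "C = (\<lambda>x. c \<circ> x) ` F" by (auto simp: lcosets_def)
  then obtain f0 where f0: "f0 \<in> F" "f = c \<circ> f0" using f by auto
  have "(\<lambda>x. f \<circ> x) ` F = (\<lambda>x. c \<circ> x) ` ((\<lambda>x. f0 \<circ> x) ` F)" using f0 by (simp add: image_comp_left_mult)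
  also have "\<dots> = C" using left_mult_F[OF f0(1)] c by simp
  finally show ?thesis .
qed

lemma F_in_lcosets: "F \<in> lcosets F' F"
  unfolding lcosets_def using id_in_F' by (intro CollectI exI[of _ id]) auto

lemma n_pos: "0 < n"
proof -
  have "F' \<subseteq> {p. p permutes {..<d}}" using F'_permutes by auto
  then have "finite F'" using finite_permutations[of "{..<d}"] finite_subset by auto
  then have "finite (lcosets F' F)" unfolding lcosets_def by (simp add: setcompr_eq_image)
  then show ?thesis using n_def F_in_lcosets card_gt_0_iff by auto
qed

lemma \<beta>_in_lcosets: "i < n \<Longrightarrow> \<beta> i \<in> lcosets F' F"
  using \<beta> by (auto simp: bij_betw_def)

lemma \<beta>_inj: "i < n \<Longrightarrow> j < n \<Longrightarrow> \<beta> i = \<beta> j \<Longrightarrow> i = j"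
  using \<beta> by (auto simp: bij_betw_def dest: inj_onD)

lemma
  assumes f: "f \<in> F'" and i: "i < n"
  shows coset_action_less: "\<alpha> f i < n"
    and \<beta>_coset_action: "\<beta> (\<alpha> f i) = (\<lambda>x. f \<circ> x) ` \<beta> i"
proof -
  have c: "(\<lambda>x. f \<circ> x) ` \<beta> i \<in> lcosets F' F" using left_mult_lcosets[OF f \<beta>_in_lcosets[OF i]] .
  show "\<alpha> f i < n"
    using c \<beta> i by (simp add: coset_action_def bij_betw_def inv_into_into[of _ _ "{..<n}", simplified])
  show "\<beta> (\<alpha> f i) = (\<lambda>x. f \<circ> x) ` \<beta> i"
    using c \<beta> i by (simp add: coset_action_def bij_betw_def f_inv_into_f)
qed

lemma coset_action_eqI: "f \<in> F' \<Longrightarrow> i < n \<Longrightarrow> j < n \<Longrightarrow> (\<lambda>x. f \<circ> x) ` \<beta> i = \<beta> j \<Longrightarrow> \<alpha> f i = j"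
  using \<beta>_inj coset_action_less \<beta>_coset_action by metis

lemma coset_action_permutes: "f \<in> F' \<Longrightarrow> \<alpha> f permutes {..<n}"
proof (rule inj_imp_permutes)
  assume f: "f \<in> F'"
  show "inj_on (\<alpha> f) {..<n}"
  proof (rule inj_onI)
    fix i j assume ij: "i \<in> {..<n}" "j \<in> {..<n}" "\<alpha> f i = \<alpha> f j"
    then have "(\<lambda>x. f \<circ> x) ` \<beta> i = (\<lambda>x. f \<circ> x) ` \<beta> j" using \<beta>_coset_action[OF f] by (metis lessThan_iff)
    then have "\<beta> i = \<beta> j" by (rule left_mult_inj[OF f])
    then show "i = j" using \<beta>_inj ij by simp
  qed
  show "\<alpha> f i \<in> {..<n}" if "i \<in> {..<n}" for i using coset_action_less[OF f] that by simp
qed (auto simp: coset_action_def)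

lemma coset_action_comp: "f \<in> F' \<Longrightarrow> g \<in> F' \<Longrightarrow> \<alpha> (f \<circ> g) = \<alpha> f \<circ> \<alpha> g"
proof
  fix i assume f: "f \<in> F'" and g: "g \<in> F'"
  show "\<alpha> (f \<circ> g) i = (\<alpha> f \<circ> \<alpha> g) i"
  proof (cases "i < n")
    case True
    have "\<beta> (\<alpha> f (\<alpha> g i)) = (\<lambda>x. (f \<circ> g) \<circ> x) ` \<beta> i"
      using \<beta>_coset_action[OF f coset_action_less[OF g True]] \<beta>_coset_action[OF g True]
      by (simp add: image_comp_left_mult)
    then show ?thesis
      using coset_action_eqI[OF F'_comp[OF f g] True] coset_action_less[OF f coset_action_less[OF g True]]
      by simp
  qed (simp add: coset_action_def)
qed

lemma coset_action_id: "\<alpha> id = id"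
proof
  fix i show "\<alpha> id i = id i"
  proof (cases "i < n")
    case True then show ?thesis using coset_action_eqI[OF id_in_F' True True] by simp
  qed (simp add: coset_action_def)
qed

lemma coset_action_fixes_0_iff: "f \<in> F' \<Longrightarrow> \<alpha> f 0 = 0 \<longleftrightarrow> f \<in> F"
proof -
  assume f: "f \<in> F'"
  have "\<alpha> f 0 = 0 \<longleftrightarrow> (\<lambda>x. f \<circ> x) ` F = F"
    using \<beta>_coset_action[OF f n_pos] \<beta>_inj[OF coset_action_less[OF f n_pos] n_pos] \<beta>_0 by auto
  also have "\<dots> \<longleftrightarrow> f \<in> F"
  proof
    assume "(\<lambda>x. f \<circ> x) ` F = F"
    moreover have "f \<circ> id \<in> (\<lambda>x. f \<circ> x) ` F" using id_in_F by (rule imageI)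
    ultimately show "f \<in> F" by simp
  qed (rule left_mult_F)
  finally show ?thesis .
qed

lemma \<beta>_coset_action_0: "C \<in> lcosets F' F \<Longrightarrow> f \<in> C \<Longrightarrow> \<beta> (\<alpha> f 0) = C"
  using \<beta>_coset_action[OF _ n_pos] lcoset_subset lcoset_eq_left_mult \<beta>_0 by (metis subsetD)

end

locale orbit_preserving_coset_enum = coset_enum +
  assumes orbits: "\<forall>f'\<in>F'. \<forall>a<d. f' a \<in> (\<lambda>f. f a) ` F"
begin

text \<open>The only use of the orbit condition on F'.\<close>

lemma lcoset_realises:
  assumes C: "C \<in> lcosets F' F" and p: "p \<in> F'" and a: "a < d"
  shows "\<exists>q\<in>C. q a = p a"
proof -
  obtain c where c: "c \<in> F'" "C = (\<lambda>x. c \<circ> x) ` F" using C by (auto simp: lcosets_def)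
  obtain f1 where f1: "f1 \<in> F" "p a = f1 a" using orbits p a by blast
  have pa: "p a < d" using permutes_in_image[OF F'_permutes[OF p]] a by simp
  obtain f2 where f2: "f2 \<in> F" "inv c (p a) = f2 (p a)" using orbits F'_inv[OF c(1)] pa by blast
  have "(c \<circ> (f2 \<circ> f1)) a = c (inv c (p a))" using f1 f2 by simp
  also have "\<dots> = p a" using permutes_inverses(1)[OF F'_permutes[OF c(1)]] by simp
  finally show ?thesis using c F_comp[OF f2(1) f1(1)] by blast
qed

end

section \<open>The homomorphism into G_{n,d}\<close>

lemma Gnd_memD:
  assumes "x \<in> Gnd n d"
  shows "snd x \<in> Aut d" "\<And>v. v \<in> tree_V d \<Longrightarrow> fst x v permutes {..<n}"
    "\<And>v. v \<notin> tree_V d \<Longrightarrow> fst x v = id" "finite {v \<in> tree_V d. fst x v 0 \<noteq> 0}"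
  using assms by (auto simp: Gnd_def)

lemma Gnd_memI:
  assumes "snd x \<in> Aut d" "\<And>v. v \<in> tree_V d \<Longrightarrow> fst x v permutes {..<n}"
    "\<And>v. v \<notin> tree_V d \<Longrightarrow> fst x v = id" "finite {v \<in> tree_V d. fst x v 0 \<noteq> 0}"
  shows "x \<in> Gnd n d"
  using assms by (cases x) (auto simp: Gnd_def)

lemma Gnd0_iff: "y \<in> Gnd0 n d \<longleftrightarrow> y \<in> Gnd n d \<and> (\<forall>v\<in>tree_V d. fst y v 0 = 0)"
  by (cases y) (auto simp: Gnd0_def)

lemma Gnd0_memI:
  assumes "snd y \<in> Aut d" "\<And>v. v \<in> tree_V d \<Longrightarrow> fst y v permutes {..<n} \<and> fst y v 0 = 0"
    "\<And>v. v \<notin> tree_V d \<Longrightarrow> fst y v = id"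
  shows "y \<in> Gnd0 n d"
proof -
  have "{v \<in> tree_V d. fst y v 0 \<noteq> 0} = {}" using assms(2) by auto
  then have "finite {v \<in> tree_V d. fst y v 0 \<noteq> 0}" by (simp only: finite.emptyI)
  then have "y \<in> Gnd n d" using assms(2) by (intro Gnd_memI[OF assms(1) _ assms(3)]) blast+
  then show ?thesis using assms(2) by (simp add: Gnd0_iff)
qed

lemma Gnd_mult_closed:
  assumes x: "x \<in> Gnd n d" and y: "y \<in> Gnd n d"
  shows "Gnd_mult d x y \<in> Gnd n d"
proof (rule Gnd_memI)
  note X = Gnd_memD[OF x] and Y = Gnd_memD[OF y]
  show "snd (Gnd_mult d x y) \<in> Aut d" using Aut_comp[OF X(1) Y(1)] by (simp add: Gnd_mult_def)
  show "fst (Gnd_mult d x y) v permutes {..<n}" if v: "v \<in> tree_V d" for v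
    using v X(2)[OF v] Y(2)[OF aut_inv_in_tree_V[OF X(1) v]] by (simp add: Gnd_mult_def permutes_compose)
  show "fst (Gnd_mult d x y) v = id" if "v \<notin> tree_V d" for v using that by (simp add: Gnd_mult_def)
  have "{v \<in> tree_V d. fst (Gnd_mult d x y) v 0 \<noteq> 0} \<subseteq>
        {v \<in> tree_V d. fst x v 0 \<noteq> 0} \<union> snd x ` {u \<in> tree_V d. fst y u 0 \<noteq> 0}"
  proof
    fix v assume v: "v \<in> {v \<in> tree_V d. fst (Gnd_mult d x y) v 0 \<noteq> 0}"
    let ?u = "aut_inv d (snd x) v"
    have vV: "v \<in> tree_V d" using v by simp
    have u: "?u \<in> tree_V d" "snd x ?u = v" using aut_inv_in_tree_V[OF X(1) vV] Aut_aut_inv[OF X(1) vV] .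
    show "v \<in> {v \<in> tree_V d. fst x v 0 \<noteq> 0} \<union> snd x ` {u \<in> tree_V d. fst y u 0 \<noteq> 0}"
    proof (cases "fst y ?u 0 = 0")
      case True
      then have "fst (Gnd_mult d x y) v 0 = fst x v 0" using vV by (simp add: Gnd_mult_def)
      then show ?thesis using v by simp
    next
      case False then show ?thesis using u by (metis (mono_tags, lifting) UnI2 image_eqI mem_Collect_eq)
    qed
  qed
  then show "finite {v \<in> tree_V d. fst (Gnd_mult d x y) v 0 \<noteq> 0}"
    using X(4) Y(4) by (meson finite_Un finite_imageI finite_subset)
qed

lemma Gnd_mult_assoc:
  assumes x: "x \<in> Gnd n d" and y: "y \<in> Gnd n d"
  shows "Gnd_mult d (Gnd_mult d x y) z = Gnd_mult d x (Gnd_mult d y z)"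
proof -
  note X = Gnd_memD[OF x] and Y = Gnd_memD[OF y]
  have "fst (Gnd_mult d (Gnd_mult d x y) z) v = fst (Gnd_mult d x (Gnd_mult d y z)) v" for v
  proof (cases "v \<in> tree_V d")
    case True
    then show ?thesis using aut_inv_in_tree_V[OF X(1) True] aut_inv_comp[OF X(1) Y(1) True]
      by (simp add: Gnd_mult_def comp_assoc)
  qed (simp add: Gnd_mult_def)
  then show ?thesis by (simp add: Gnd_mult_def prod_eq_iff fun_eq_iff comp_assoc)
qed

context coset_enum
begin

abbreviation "G \<equiv> G_grp d F F'"
abbreviation "U \<equiv> U_grp d F"
abbreviation "\<phi> \<equiv> phi n d \<beta>"

lemma G_grpD:
  assumes "g \<in> G"
  shows "g \<in> Aut d" "\<And>v. v \<in> tree_V d \<Longrightarrow> loc_perm d g v \<in> F'"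
    "finite {v \<in> tree_V d. loc_perm d g v \<notin> F}"
  using assms by (auto simp: G_grp_def)

lemma G_grp_comp:
  assumes g: "g \<in> G" and h: "h \<in> G"
  shows "g \<circ> h \<in> G"
proof -
  note Gg = G_grpD[OF g] and Gh = G_grpD[OF h]
  have lp: "loc_perm d (g \<circ> h) v = loc_perm d g (h v) \<circ> loc_perm d h v" if "v \<in> tree_V d" for v
    using loc_perm_comp[OF Gg(1) Gh(1) that] .
  have "{v \<in> tree_V d. loc_perm d (g \<circ> h) v \<notin> F} \<subseteq>
     {v \<in> tree_V d. loc_perm d h v \<notin> F} \<union> (h -` {w \<in> tree_V d. loc_perm d g w \<notin> F} \<inter> tree_V d)"
    using lp F_comp Aut_tree_V[OF Gh(1)] by fastforce
  moreover have "finite (h -` {w \<in> tree_V d. loc_perm d g w \<notin> F} \<inter> tree_V d)"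
    using finite_vimage_IntI[OF Gg(3) Aut_inj_on[OF Gh(1)]] .
  ultimately have "finite {v \<in> tree_V d. loc_perm d (g \<circ> h) v \<notin> F}"
    using Gh(3) by (meson finite_Un finite_subset)
  moreover have "loc_perm d (g \<circ> h) v \<in> F'" if v: "v \<in> tree_V d" for v
    using lp[OF v] Gg(2)[OF Aut_tree_V[OF Gh(1) v]] Gh(2)[OF v] F'_comp by simp
  ultimately show ?thesis using Aut_comp[OF Gg(1) Gh(1)] by (simp add: G_grp_def)
qed

lemma G_grp_aut_inv:
  assumes g: "g \<in> G"
  shows "aut_inv d g \<in> G"
proof -
  note Gg = G_grpD[OF g]
  have lp: "loc_perm d (aut_inv d g) v = inv (loc_perm d g (aut_inv d g v))" if "v \<in> tree_V d" for v
    using loc_perm_aut_inv[OF Gg(1) that] .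
  have "{v \<in> tree_V d. loc_perm d (aut_inv d g) v \<notin> F} \<subseteq> g ` {w \<in> tree_V d. loc_perm d g w \<notin> F}"
  proof
    fix v assume v: "v \<in> {v \<in> tree_V d. loc_perm d (aut_inv d g) v \<notin> F}"
    let ?u = "aut_inv d g v"
    have vV: "v \<in> tree_V d" using v by simp
    have "loc_perm d g ?u \<notin> F" using v lp[OF vV] F_inv by auto
    then show "v \<in> g ` {w \<in> tree_V d. loc_perm d g w \<notin> F}"
      using aut_inv_in_tree_V[OF Gg(1) vV] Aut_aut_inv[OF Gg(1) vV] by (metis (mono_tags, lifting) image_eqI mem_Collect_eq)
  qed
  then have "finite {v \<in> tree_V d. loc_perm d (aut_inv d g) v \<notin> F}"
    using Gg(3) by (meson finite_imageI finite_subset)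
  moreover have "loc_perm d (aut_inv d g) v \<in> F'" if v: "v \<in> tree_V d" for v
    using lp[OF v] Gg(2)[OF aut_inv_in_tree_V[OF Gg(1) v]] F'_inv by simp
  ultimately show ?thesis using aut_inv_in_Aut[OF Gg(1)] by (simp add: G_grp_def)
qed

lemma U_grp_subset: "U \<subseteq> G"
proof
  fix u assume u: "u \<in> U"
  then have "{v \<in> tree_V d. loc_perm d u v \<notin> F} = {}" by (auto simp: U_grp_def)
  then have "finite {v \<in> tree_V d. loc_perm d u v \<notin> F}" by (simp only: finite.emptyI)
  then show "u \<in> G" using u F_sub by (auto simp: U_grp_def G_grp_def)
qed

lemma fst_phi: "v \<in> tree_V d \<Longrightarrow> fst (\<phi> g) v = \<alpha> (loc_perm d g (aut_inv d g v))"
  and fst_phi_outside: "v \<notin> tree_V d \<Longrightarrow> fst (\<phi> g) v = id"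
  and snd_phi: "snd (\<phi> g) = g"
  by (auto simp: phi_def)

lemma inj_phi: "inj \<phi>"
  by (metis injI snd_phi)

lemma phi_in_Gnd:
  assumes g: "g \<in> G"
  shows "\<phi> g \<in> Gnd n d"
proof (rule Gnd_memI)
  note Gg = G_grpD[OF g]
  show "snd (\<phi> g) \<in> Aut d" using Gg(1) by (simp add: snd_phi)
  show "fst (\<phi> g) v permutes {..<n}" if v: "v \<in> tree_V d" for v
    using coset_action_permutes[OF Gg(2)[OF aut_inv_in_tree_V[OF Gg(1) v]]] fst_phi[OF v] by simp
  show "fst (\<phi> g) v = id" if "v \<notin> tree_V d" for v using fst_phi_outside[OF that] .
  have "{v \<in> tree_V d. fst (\<phi> g) v 0 \<noteq> 0} \<subseteq> g ` {w \<in> tree_V d. loc_perm d g w \<notin> F}"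
  proof
    fix v assume v: "v \<in> {v \<in> tree_V d. fst (\<phi> g) v 0 \<noteq> 0}"
    let ?u = "aut_inv d g v"
    have vV: "v \<in> tree_V d" using v by simp
    have u: "?u \<in> tree_V d" "g ?u = v" using aut_inv_in_tree_V[OF Gg(1) vV] Aut_aut_inv[OF Gg(1) vV] .
    have "loc_perm d g ?u \<notin> F" using v fst_phi[OF vV] coset_action_fixes_0_iff[OF Gg(2)[OF u(1)]] by simp
    then show "v \<in> g ` {w \<in> tree_V d. loc_perm d g w \<notin> F}" using u by (metis (mono_tags, lifting) image_eqI mem_Collect_eq)
  qed
  then show "finite {v \<in> tree_V d. fst (\<phi> g) v 0 \<noteq> 0}"
    using Gg(3) by (meson finite_imageI finite_subset)
qed

lemma phi_comp:
  assumes g: "g \<in> G" and h: "h \<in> G"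
  shows "\<phi> (g \<circ> h) = Gnd_mult d (\<phi> g) (\<phi> h)"
proof -
  note Gg = G_grpD[OF g] and Gh = G_grpD[OF h]
  have "fst (\<phi> (g \<circ> h)) v = fst (Gnd_mult d (\<phi> g) (\<phi> h)) v" if v: "v \<in> tree_V d" for v
  proof -
    let ?u = "aut_inv d g v"
    let ?w = "aut_inv d h ?u"
    have u: "?u \<in> tree_V d" using aut_inv_in_tree_V[OF Gg(1) v] .
    have w: "?w \<in> tree_V d" "h ?w = ?u" using aut_inv_in_tree_V[OF Gh(1) u] Aut_aut_inv[OF Gh(1) u] .
    have "fst (\<phi> (g \<circ> h)) v = \<alpha> (loc_perm d (g \<circ> h) ?w)"
      using fst_phi[OF v] aut_inv_comp[OF Gg(1) Gh(1) v] by simp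
    also have "\<dots> = \<alpha> (loc_perm d g ?u) \<circ> \<alpha> (loc_perm d h ?w)"
      using loc_perm_comp[OF Gg(1) Gh(1) w(1)] w(2) coset_action_comp Gg(2)[OF u] Gh(2)[OF w(1)] by simp
    also have "\<dots> = fst (Gnd_mult d (\<phi> g) (\<phi> h)) v"
      using v u fst_phi[OF v] fst_phi[OF u] by (simp add: Gnd_mult_def snd_phi)
    finally show ?thesis .
  qed
  then show ?thesis by (simp add: prod_eq_iff fun_eq_iff Gnd_mult_def snd_phi fst_phi_outside)
qed

lemma phi_U_grp_in_Gnd0:
  assumes u: "u \<in> U"
  shows "\<phi> u \<in> Gnd0 n d"
proof -
  have uG: "u \<in> G" using u U_grp_subset by auto
  have "fst (\<phi> u) v 0 = 0" if v: "v \<in> tree_V d" for v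
  proof -
    have "loc_perm d u (aut_inv d u v) \<in> F"
      using u aut_inv_in_tree_V[OF G_grpD(1)[OF uG] v] by (auto simp: U_grp_def)
    then show ?thesis using fst_phi[OF v] coset_action_fixes_0_iff F_sub by auto
  qed
  then show ?thesis using phi_in_Gnd[OF uG] by (simp add: Gnd0_iff)
qed

end

section \<open>Continuity and closed image\<close>

lemma istopology_nbhd_basis:
  assumes antimono: "\<And>x S S'. S \<subseteq> S' \<Longrightarrow> N x S' \<subseteq> N x S"
  shows "istopology (\<lambda>W. W \<subseteq> A \<and> (\<forall>x\<in>W. \<exists>S. finite S \<and> S \<subseteq> B \<and> N x S \<subseteq> W))"
  unfolding istopology_def
proof (rule conjI; intro allI impI)
  fix W1 W2
  assume W1: "W1 \<subseteq> A \<and> (\<forall>x\<in>W1. \<exists>S. finite S \<and> S \<subseteq> B \<and> N x S \<subseteq> W1)"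
    and W2: "W2 \<subseteq> A \<and> (\<forall>x\<in>W2. \<exists>S. finite S \<and> S \<subseteq> B \<and> N x S \<subseteq> W2)"
  have "\<exists>S. finite S \<and> S \<subseteq> B \<and> N x S \<subseteq> W1 \<inter> W2" if x: "x \<in> W1 \<inter> W2" for x
  proof -
    obtain S1 where "finite S1" "S1 \<subseteq> B" "N x S1 \<subseteq> W1" using W1 x by blast
    moreover obtain S2 where "finite S2" "S2 \<subseteq> B" "N x S2 \<subseteq> W2" using W2 x by blast
    moreover have "N x (S1 \<union> S2) \<subseteq> N x S1" "N x (S1 \<union> S2) \<subseteq> N x S2" by (simp_all add: antimono)
    ultimately show ?thesis by (intro exI[of _ "S1 \<union> S2"]) auto
  qed
  then show "W1 \<inter> W2 \<subseteq> A \<and> (\<forall>x\<in>W1 \<inter> W2. \<exists>S. finite S \<and> S \<subseteq> B \<and> N x S \<subseteq> W1 \<inter> W2)"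
    using W1 by blast
next
  fix K assume "\<forall>W\<in>K. W \<subseteq> A \<and> (\<forall>x\<in>W. \<exists>S. finite S \<and> S \<subseteq> B \<and> N x S \<subseteq> W)"
  then show "\<Union>K \<subseteq> A \<and> (\<forall>x\<in>\<Union>K. \<exists>S. finite S \<and> S \<subseteq> B \<and> N x S \<subseteq> \<Union>K)"
    by (meson Union_iff Union_least subset_iff)
qed

definition G_nbhd :: "nat \<Rightarrow> (nat \<Rightarrow> nat) set \<Rightarrow> (nat list \<Rightarrow> nat list) \<Rightarrow> nat list set \<Rightarrow>
    (nat list \<Rightarrow> nat list) set" where
  "G_nbhd d F g S = {g \<circ> u | u. u \<in> U_grp d F \<and> (\<forall>v\<in>S. u v = v)}"

definition Gnd_nbhd :: "nat \<Rightarrow> nat \<Rightarrow> elt \<Rightarrow> nat list set \<Rightarrow> elt set" where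
  "Gnd_nbhd n d x S = {Gnd_mult d x y | y. y \<in> Gnd0 n d \<and> (\<forall>v\<in>S. fst y v = id \<and> snd y v = v)}"

lemma openin_G_top:
  "openin (G_top d F F') W \<longleftrightarrow>
    W \<subseteq> G_grp d F F' \<and> (\<forall>g\<in>W. \<exists>S. finite S \<and> S \<subseteq> tree_V d \<and> G_nbhd d F g S \<subseteq> W)"
proof -
  have "istopology (\<lambda>W. W \<subseteq> G_grp d F F' \<and>
      (\<forall>g\<in>W. \<exists>S. finite S \<and> S \<subseteq> tree_V d \<and> G_nbhd d F g S \<subseteq> W))"
    by (rule istopology_nbhd_basis) (auto simp: G_nbhd_def)
  then show ?thesis unfolding G_top_def G_nbhd_def[abs_def] by simp
qed

lemma openin_Gnd_top:
  "openin (Gnd_top n d) W \<longleftrightarrow>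
    W \<subseteq> Gnd n d \<and> (\<forall>x\<in>W. \<exists>S. finite S \<and> S \<subseteq> tree_V d \<and> Gnd_nbhd n d x S \<subseteq> W)"
proof -
  have "istopology (\<lambda>W. W \<subseteq> Gnd n d \<and>
      (\<forall>x\<in>W. \<exists>S. finite S \<and> S \<subseteq> tree_V d \<and> Gnd_nbhd n d x S \<subseteq> W))"
    by (rule istopology_nbhd_basis) (auto simp: Gnd_nbhd_def)
  then show ?thesis unfolding Gnd_top_def Gnd_nbhd_def[abs_def] by simp
qed

lemma Gnd_nbhd_subset: "x \<in> Gnd n d \<Longrightarrow> Gnd_nbhd n d x S \<subseteq> Gnd n d"
  unfolding Gnd_nbhd_def Gnd0_iff using Gnd_mult_closed by blast

lemma topspace_Gnd_top: "topspace (Gnd_top n d) = Gnd n d"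
proof
  have "openin (Gnd_top n d) (Gnd n d)"
    unfolding openin_Gnd_top using Gnd_nbhd_subset by (intro conjI ballI exI[of _ "{}"]) auto
  then show "Gnd n d \<subseteq> topspace (Gnd_top n d)" by (rule openin_subset)
  show "topspace (Gnd_top n d) \<subseteq> Gnd n d"
    by (metis openin_Gnd_top openin_topspace)
qed

definition tree_star :: "nat \<Rightarrow> nat list \<Rightarrow> nat list set" where
  "tree_star d w = insert w (nbr w ` {..<d})"

lemma tree_star_subset: "w \<in> tree_V d \<Longrightarrow> tree_star d w \<subseteq> tree_V d"
  by (auto simp: tree_star_def nbr_in_tree_V)

lemma finite_tree_star: "finite (tree_star d w)"
  by (simp add: tree_star_def)

lemma fixes_tree_star:
  assumes "\<forall>v\<in>tree_star d w. h v = v"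
  shows "h w = w" "loc_perm d h w = id"
  using assms loc_perm_eq_id[of h w d] by (auto simp: tree_star_def)

context coset_enum
begin

lemma topspace_G_top: "topspace (G_top d F F') = G"
proof
  have "G_nbhd d F g {} \<subseteq> G" if "g \<in> G" for g
    using that G_grp_comp U_grp_subset by (auto simp: G_nbhd_def)
  then have "openin (G_top d F F') G" unfolding openin_G_top by (intro conjI ballI exI[of _ "{}"]) auto
  then show "G \<subseteq> topspace (G_top d F F')" by (rule openin_subset)
  show "topspace (G_top d F F') \<subseteq> G"
    by (metis openin_G_top openin_topspace)
qed

lemma phi_fixes_tree_star:
  assumes u: "u \<in> Aut d" and w: "w \<in> tree_V d" and fixed: "\<forall>v\<in>tree_star d w. u v = v"
  shows "fst (\<phi> u) w = id" "snd (\<phi> u) w = w"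
proof -
  have "u w = w" "loc_perm d u w = id" using fixes_tree_star[OF fixed] .
  moreover have "aut_inv d u w = w" using aut_inv_Aut[OF u w] \<open>u w = w\<close> by simp
  ultimately show "fst (\<phi> u) w = id" "snd (\<phi> u) w = w" using fst_phi[OF w] coset_action_id snd_phi by simp_all
qed

theorem continuous_map_phi: "continuous_map (G_top d F F') (Gnd_top n d) \<phi>"
  unfolding continuous_map_def topspace_G_top topspace_Gnd_top
proof (intro conjI allI impI)
  show "\<phi> \<in> G \<rightarrow> Gnd n d" using phi_in_Gnd by auto
  fix W assume W: "openin (Gnd_top n d) W"
  show "openin (G_top d F F') {g \<in> G. \<phi> g \<in> W}"
    unfolding openin_G_top
  proof (intro conjI ballI)
    fix g assume g: "g \<in> {g \<in> G. \<phi> g \<in> W}"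
    then obtain S where S: "finite S" "S \<subseteq> tree_V d" "Gnd_nbhd n d (\<phi> g) S \<subseteq> W"
      using W unfolding openin_Gnd_top by blast
    let ?S = "\<Union>v\<in>S. tree_star d v"
    have "G_nbhd d F g ?S \<subseteq> {g \<in> G. \<phi> g \<in> W}"
    proof
      fix k assume "k \<in> G_nbhd d F g ?S"
      then obtain u where u: "k = g \<circ> u" "u \<in> U" "\<forall>v\<in>?S. u v = v" by (auto simp: G_nbhd_def)
      have uG: "u \<in> G" using u(2) U_grp_subset by auto
      have "\<forall>v\<in>S. fst (\<phi> u) v = id \<and> snd (\<phi> u) v = v"
        using phi_fixes_tree_star[OF G_grpD(1)[OF uG]] u(3) S(2) by blast
      then have "\<phi> k \<in> Gnd_nbhd n d (\<phi> g) S"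
        unfolding Gnd_nbhd_def using phi_comp[of g u] g uG u(1) phi_U_grp_in_Gnd0[OF u(2)]
        by (intro CollectI exI[of _ "\<phi> u"]) auto
      then show "k \<in> {g \<in> G. \<phi> g \<in> W}" using S(3) G_grp_comp[of g u] g uG u(1) by auto
    qed
    moreover have "finite ?S" "?S \<subseteq> tree_V d" using S(1,2) finite_tree_star tree_star_subset by blast+
    ultimately show "\<exists>S. finite S \<and> S \<subseteq> tree_V d \<and> G_nbhd d F g S \<subseteq> {g \<in> G. \<phi> g \<in> W}" by blast
  qed auto
qed

lemma phi_in_Gnd_nbhd_tree_star:
  assumes x: "x \<in> Gnd n d" and w: "w \<in> tree_V d" and g: "g \<in> G"
    and near: "\<phi> g \<in> Gnd_nbhd n d x (tree_star d w)"
  shows "loc_perm d (snd x) w \<in> F'" "fst x (snd x w) = \<alpha> (loc_perm d (snd x) w)"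
proof -
  let ?\<gamma> = "snd x"
  obtain y where y: "y \<in> Gnd0 n d" "\<forall>v\<in>tree_star d w. fst y v = id \<and> snd y v = v"
    and eq: "\<phi> g = Gnd_mult d x y" using near unfolding Gnd_nbhd_def by blast
  have \<gamma>: "?\<gamma> \<in> Aut d" using Gnd_memD(1)[OF x] .
  have h: "snd y \<in> Aut d" using y(1) Gnd_memD(1) unfolding Gnd0_iff by blast
  have "\<forall>v\<in>tree_star d w. snd y v = v" using y(2) by simp
  note hw = fixes_tree_star[OF this]
  have fyw: "fst y w = id" using y(2) by (simp add: tree_star_def)
  have g_eq: "g = ?\<gamma> \<circ> snd y" using arg_cong[OF eq, of snd] by (simp add: snd_phi Gnd_mult_def)
  have loc: "loc_perm d g w = loc_perm d ?\<gamma> w" using loc_perm_comp[OF \<gamma> h w] hw g_eq by simp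
  then show "loc_perm d ?\<gamma> w \<in> F'" using G_grpD(2)[OF g w] by simp
  have \<gamma>w: "?\<gamma> w \<in> tree_V d" "aut_inv d ?\<gamma> (?\<gamma> w) = w" using Aut_tree_V[OF \<gamma> w] aut_inv_Aut[OF \<gamma> w] .
  have "aut_inv d g (?\<gamma> w) = w" using aut_inv_Aut[OF G_grpD(1)[OF g] w] g_eq hw(1) by simp
  then have "fst (\<phi> g) (?\<gamma> w) = \<alpha> (loc_perm d ?\<gamma> w)" using fst_phi[OF \<gamma>w(1)] loc by simp
  moreover have "fst (Gnd_mult d x y) (?\<gamma> w) = fst x (?\<gamma> w)" using \<gamma>w fyw by (simp add: Gnd_mult_def)
  ultimately show "fst x (?\<gamma> w) = \<alpha> (loc_perm d ?\<gamma> w)" using eq by simp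
qed

lemma phi_imageI:
  assumes x: "x \<in> Gnd n d"
    and local: "\<forall>w\<in>tree_V d. loc_perm d (snd x) w \<in> F' \<and> fst x (snd x w) = \<alpha> (loc_perm d (snd x) w)"
  shows "snd x \<in> G" "x = \<phi> (snd x)"
proof -
  let ?\<gamma> = "snd x"
  note X = Gnd_memD[OF x]
  have "fst x v = fst (\<phi> ?\<gamma>) v" for v
  proof (cases "v \<in> tree_V d")
    case True
    let ?w = "aut_inv d ?\<gamma> v"
    have "fst x (?\<gamma> ?w) = \<alpha> (loc_perm d ?\<gamma> ?w)" using local aut_inv_in_tree_V[OF X(1) True] by blast
    then show ?thesis using Aut_aut_inv[OF X(1) True] fst_phi[OF True] by simp
  qed (simp add: X(3) fst_phi_outside)
  then show "x = \<phi> ?\<gamma>" by (simp add: prod_eq_iff fun_eq_iff snd_phi)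
  have "{w \<in> tree_V d. loc_perm d ?\<gamma> w \<notin> F} \<subseteq> ?\<gamma> -` {v \<in> tree_V d. fst x v 0 \<noteq> 0} \<inter> tree_V d"
  proof
    fix w assume "w \<in> {w \<in> tree_V d. loc_perm d ?\<gamma> w \<notin> F}"
    then have w: "w \<in> tree_V d" "loc_perm d ?\<gamma> w \<notin> F" by auto
    then have "fst x (?\<gamma> w) 0 \<noteq> 0" using local coset_action_fixes_0_iff by auto
    then show "w \<in> ?\<gamma> -` {v \<in> tree_V d. fst x v 0 \<noteq> 0} \<inter> tree_V d"
      using w Aut_tree_V[OF X(1)] by auto
  qed
  moreover have "finite (?\<gamma> -` {v \<in> tree_V d. fst x v 0 \<noteq> 0} \<inter> tree_V d)"
    using finite_vimage_IntI[OF X(4) Aut_inj_on[OF X(1)]] .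
  ultimately have "finite {w \<in> tree_V d. loc_perm d ?\<gamma> w \<notin> F}" by (rule finite_subset)
  then show "?\<gamma> \<in> G" using X(1) local by (simp add: G_grp_def)
qed

theorem closedin_phi_image: "closedin (Gnd_top n d) (\<phi> ` G)"
  unfolding closedin_def topspace_Gnd_top openin_Gnd_top
proof (intro conjI ballI)
  show "\<phi> ` G \<subseteq> Gnd n d" using phi_in_Gnd by auto
  fix x assume x: "x \<in> Gnd n d - \<phi> ` G"
  have "\<not> (\<forall>w\<in>tree_V d. loc_perm d (snd x) w \<in> F' \<and> fst x (snd x w) = \<alpha> (loc_perm d (snd x) w))"
  proof
    assume "\<forall>w\<in>tree_V d. loc_perm d (snd x) w \<in> F' \<and> fst x (snd x w) = \<alpha> (loc_perm d (snd x) w)"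
    then have "x \<in> \<phi> ` G" using phi_imageI[OF DiffD1[OF x]] by blast
    then show False using x by blast
  qed
  then obtain w where w: "w \<in> tree_V d"
    and bad: "\<not> (loc_perm d (snd x) w \<in> F' \<and> fst x (snd x w) = \<alpha> (loc_perm d (snd x) w))"
    by blast
  have "Gnd_nbhd n d x (tree_star d w) \<inter> \<phi> ` G = {}"
  proof (rule ccontr)
    assume "Gnd_nbhd n d x (tree_star d w) \<inter> \<phi> ` G \<noteq> {}"
    then obtain g where "g \<in> G" "\<phi> g \<in> Gnd_nbhd n d x (tree_star d w)" by blast
    then show False using phi_in_Gnd_nbhd_tree_star[OF DiffD1[OF x] w] bad by simp
  qed
  then have "Gnd_nbhd n d x (tree_star d w) \<subseteq> Gnd n d - \<phi> ` G"
    using Gnd_nbhd_subset[OF DiffD1[OF x]] by blast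
  then show "\<exists>S. finite S \<and> S \<subseteq> tree_V d \<and> Gnd_nbhd n d x S \<subseteq> Gnd n d - \<phi> ` G"
    using finite_tree_star tree_star_subset[OF w] by (intro exI[of _ "tree_star d w"]) simp
qed (rule Diff_subset)

end

section \<open>Cocompactness\<close>

lemma ex_quotient_map: "\<exists>Q. quotient_map X Q q"
proof -
  define opn where "opn = (\<lambda>U. U \<subseteq> q ` topspace X \<and> openin X {x \<in> topspace X. q x \<in> U})"
  have "istopology opn" unfolding istopology_def
  proof (intro conjI allI impI)
    fix S T assume "opn S" "opn T"
    moreover have "{x \<in> topspace X. q x \<in> S \<inter> T} =
        {x \<in> topspace X. q x \<in> S} \<inter> {x \<in> topspace X. q x \<in> T}" by auto
    ultimately show "opn (S \<inter> T)" unfolding opn_def by (auto intro: openin_Int)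
  next
    fix K assume K: "\<forall>U\<in>K. opn U"
    have "{x \<in> topspace X. q x \<in> \<Union>K} = (\<Union>U\<in>K. {x \<in> topspace X. q x \<in> U})" by auto
    then show "opn (\<Union>K)" using K unfolding opn_def by (auto intro: openin_Union)
  qed
  then have open_opn: "openin (topology opn) = opn" by (rule topology_inverse')
  have "topspace (topology opn) = q ` topspace X"
  proof
    show "topspace (topology opn) \<subseteq> q ` topspace X"
      unfolding topspace_def[of "topology opn"] open_opn by (auto simp: opn_def)
    have "{x \<in> topspace X. q x \<in> q ` topspace X} = topspace X" by auto
    then have "opn (q ` topspace X)" by (simp add: opn_def)
    then show "q ` topspace X \<subseteq> topspace (topology opn)"
      using openin_subset open_opn by metis
  qed
  then have "quotient_map X (topology opn) q"
    unfolding quotient_map_def open_opn by (auto simp: opn_def)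
  then show ?thesis by blast
qed

lemma cocompactI:
  assumes C: "compactin X C" and meets: "\<And>x. x \<in> topspace X \<Longrightarrow> \<exists>c\<in>C. m x ` H = m c ` H"
  shows "cocompact X m H"
proof -
  obtain Q where Q: "quotient_map X Q (\<lambda>x. m x ` H)" using ex_quotient_map by blast
  have CX: "C \<subseteq> topspace X" using C by (simp add: compactin_def)
  have "topspace Q = (\<lambda>x. m x ` H) ` topspace X" using Q by (simp add: quotient_map_def)
  also have "\<dots> = (\<lambda>x. m x ` H) ` C" using meets CX by (auto simp: image_iff)
  finally have "topspace Q = (\<lambda>x. m x ` H) ` C" .
  moreover have "compactin Q ((\<lambda>x. m x ` H) ` C)"
    using image_compactin[OF C quotient_imp_continuous_map[OF Q]] .
  ultimately show ?thesis unfolding cocompact_def compact_space_def using Q by auto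
qed

definition Gnd_ldiv :: "nat \<Rightarrow> elt \<Rightarrow> elt \<Rightarrow> elt" where
  "Gnd_ldiv d x y = ((\<lambda>v. if v \<in> tree_V d then inv (fst x (snd x v)) \<circ> fst y (snd x v) else id),
                     aut_inv d (snd x) \<circ> snd y)"

lemma Gnd_ldiv_in_Gnd0:
  assumes x: "x \<in> Gnd0 n d" and y: "y \<in> Gnd0 n d"
  shows "Gnd_ldiv d x y \<in> Gnd0 n d"
proof (rule Gnd0_memI)
  note X = Gnd_memD[OF x[unfolded Gnd0_iff, THEN conjunct1]]
    and Y = Gnd_memD[OF y[unfolded Gnd0_iff, THEN conjunct1]]
  show "snd (Gnd_ldiv d x y) \<in> Aut d"
    using Aut_comp[OF aut_inv_in_Aut[OF X(1)] Y(1)] by (simp add: Gnd_ldiv_def)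
  fix v assume v: "v \<in> tree_V d"
  have xv: "snd x v \<in> tree_V d" using Aut_tree_V[OF X(1) v] .
  have "fst x (snd x v) 0 = 0" "fst y (snd x v) 0 = 0" using x y xv by (simp_all add: Gnd0_iff)
  then show "fst (Gnd_ldiv d x y) v permutes {..<n} \<and> fst (Gnd_ldiv d x y) v 0 = 0"
    using v X(2)[OF xv] Y(2)[OF xv]
    by (simp add: Gnd_ldiv_def permutes_compose permutes_inv permutes_inv_eq)
qed (simp add: Gnd_ldiv_def)

lemma Gnd_mult_ldiv:
  assumes x: "x \<in> Gnd n d" and y: "y \<in> Gnd n d"
  shows "Gnd_mult d x (Gnd_ldiv d x y) = y"
proof -
  note X = Gnd_memD[OF x] and Y = Gnd_memD[OF y]
  have "fst (Gnd_mult d x (Gnd_ldiv d x y)) v = fst y v" if v: "v \<in> tree_V d" for v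
    using v aut_inv_in_tree_V[OF X(1) v] Aut_aut_inv[OF X(1) v]
      permutes_inv_o(1)[OF X(2)[OF v]]
    by (simp add: Gnd_mult_def Gnd_ldiv_def comp_assoc[symmetric])
  then show ?thesis
    using comp_aut_inv(1)[OF X(1)] Y(3)
    by (auto simp: prod_eq_iff fun_eq_iff Gnd_mult_def Gnd_ldiv_def comp_assoc[symmetric])
qed

lemma Gnd0_in_Gnd_nbhd:
  assumes x: "x \<in> Gnd0 n d" and y: "y \<in> Gnd0 n d"
    and agree: "\<And>v. v \<in> S \<Longrightarrow> fst y (snd x v) = fst x (snd x v) \<and> snd y v = snd x v"
    and S: "S \<subseteq> tree_V d"
  shows "y \<in> Gnd_nbhd n d x S"
proof -
  have xG: "x \<in> Gnd n d" and yG: "y \<in> Gnd n d" using x y by (simp_all add: Gnd0_iff)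
  note X = Gnd_memD[OF xG]
  have "fst (Gnd_ldiv d x y) v = id \<and> snd (Gnd_ldiv d x y) v = v" if v: "v \<in> S" for v
  proof -
    have vV: "v \<in> tree_V d" using v S by blast
    show ?thesis
      using agree[OF v] vV permutes_inv_o(2)[OF X(2)[OF Aut_tree_V[OF X(1) vV]]] aut_inv_Aut[OF X(1) vV]
      by (simp add: Gnd_ldiv_def)
  qed
  then show ?thesis
    unfolding Gnd_nbhd_def using Gnd_ldiv_in_Gnd0[OF x y] Gnd_mult_ldiv[OF xG yG]
    by (intro CollectI exI[of _ "Gnd_ldiv d x y"]) simp
qed

definition stab_pairs :: "nat \<Rightarrow> nat \<Rightarrow> ((nat \<Rightarrow> nat) \<times> (nat \<Rightarrow> nat)) set" where
  "stab_pairs n d = {(s, q). s permutes {..<n} \<and> s 0 = 0 \<and> q permutes {..<d}}"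

abbreviation param_space :: "nat \<Rightarrow> nat \<Rightarrow> (nat list \<Rightarrow> (nat \<Rightarrow> nat) \<times> (nat \<Rightarrow> nat)) topology" where
  "param_space n d \<equiv> product_topology (\<lambda>_. discrete_topology (stab_pairs n d)) (tree_V d)"

text \<open>A point z of param_space prescribes at each vertex v an element of S_{n-1} and a
  permutation q of the colours. The local permutation actually used at v is q corrected by a
  transposition so that it agrees with the colour already fixed by the edge towards the root.\<close>

definition corrected_perm :: "(nat list \<Rightarrow> (nat \<Rightarrow> nat) \<times> (nat \<Rightarrow> nat)) \<Rightarrow> nat list \<Rightarrow> nat list \<Rightarrow>
    nat \<Rightarrow> nat \<Rightarrow> nat \<Rightarrow> nat" where
  "corrected_perm z w u a b = Transposition.transpose (snd (z w) a) b \<circ> snd (z w)"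

definition param_map :: "nat \<Rightarrow> (nat list \<Rightarrow> (nat \<Rightarrow> nat) \<times> (nat \<Rightarrow> nat)) \<Rightarrow> elt" where
  "param_map d z = ((\<lambda>v. if v \<in> tree_V d then fst (z v) else id),
                    build_aut d [] (corrected_perm z) (snd (z [])))"

lemma stab_pairs_finite: "finite (stab_pairs n d)"
proof -
  have "stab_pairs n d \<subseteq> {s. s permutes {..<n}} \<times> {q. q permutes {..<d}}"
    by (auto simp: stab_pairs_def)
  then show ?thesis by (rule finite_subset) (simp add: finite_permutations)
qed

lemma compact_param_space: "compact_space (param_space n d)"
  by (simp add: compact_space_product_topology compact_space_discrete_topology stab_pairs_finite)

lemma param_spaceD:
  "z \<in> (\<Pi>\<^sub>E v\<in>tree_V d. stab_pairs n d) \<Longrightarrow> v \<in> tree_V d \<Longrightarrow>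
    fst (z v) permutes {..<n} \<and> fst (z v) 0 = 0 \<and> snd (z v) permutes {..<d}"
  by (cases "z v") (auto simp: stab_pairs_def dest: PiE_mem)

lemma build_data_corrected_perm:
  assumes z: "z \<in> (\<Pi>\<^sub>E v\<in>tree_V d. stab_pairs n d)"
  shows "build_data d [] (\<lambda>_. {p. p permutes {..<d}}) (corrected_perm z) (snd (z []))"
proof
  show "snd (z []) \<in> {p. p permutes {..<d}}" using param_spaceD[OF z tree_V_Nil] by simp
  fix w u u' a p assume w: "w \<in> tree_V d" and a: "a < d" and p: "p \<in> {p. p permutes {..<d}}"
  have q: "snd (z w) permutes {..<d}" using param_spaceD[OF z w] by blast
  have "snd (z w) a < d" "p a < d"
    using a p permutes_in_image[OF q, of a] permutes_in_image[of p "{..<d}" a] by auto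
  then show "corrected_perm z w u a (p a) \<in> {p. p permutes {..<d}} \<and> corrected_perm z w u a (p a) a = p a"
    using permutes_compose[OF q permutes_swap_id[of "snd (z w) a" "{..<d}" "p a"]]
    by (simp add: corrected_perm_def)
qed simp_all

lemma
  assumes z: "z \<in> (\<Pi>\<^sub>E v\<in>tree_V d. stab_pairs n d)"
  shows snd_param_map_in_Aut: "snd (param_map d z) \<in> Aut d"
    and snd_param_map_Nil: "snd (param_map d z) [] = []"
    and loc_perm_snd_param_map: "\<And>w. w \<in> tree_V d \<Longrightarrow>
      loc_perm d (snd (param_map d z)) w = build_perm [] (corrected_perm z) (snd (z [])) w"
proof -
  interpret B: build_data d "[]" "\<lambda>_. {p. p permutes {..<d}}" "corrected_perm z" "snd (z [])"
    using build_data_corrected_perm[OF z] .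
  show "snd (param_map d z) \<in> Aut d" "snd (param_map d z) [] = []"
    "\<And>w. w \<in> tree_V d \<Longrightarrow> loc_perm d (snd (param_map d z)) w = build_perm [] (corrected_perm z) (snd (z [])) w"
    using B.build_aut_in_Aut B.build_aut_Nil B.loc_perm_build_aut by (simp_all add: param_map_def)
qed

lemma fst_param_map: "v \<in> tree_V d \<Longrightarrow> fst (param_map d z) v = fst (z v)"
  by (simp add: param_map_def)

lemma param_map_in_Gnd0:
  assumes z: "z \<in> (\<Pi>\<^sub>E v\<in>tree_V d. stab_pairs n d)"
  shows "param_map d z \<in> Gnd0 n d"
  using snd_param_map_in_Aut[OF z] param_spaceD[OF z] by (intro Gnd0_memI) (simp_all add: param_map_def)

lemma snd_param_map_cong:
  assumes s: "s \<in> tree_V d" and agree: "\<forall>k\<le>length s. z (take k s) = z' (take k s)"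
  shows "snd (param_map d z) s = snd (param_map d z') s"
proof -
  have "\<forall>k\<le>length s. corrected_perm z (take k s) = corrected_perm z' (take k s)"
    using agree by (simp add: corrected_perm_def fun_eq_iff)
  then have "build [] (corrected_perm z) (snd (z' [])) (rev s) = build [] (corrected_perm z') (snd (z' [])) (rev s)"
    by (rule build_cong)
  moreover have "z [] = z' []" using agree[rule_format, of 0] by simp
  ultimately show ?thesis using s by (simp add: param_map_def build_aut_def)
qed

text \<open>Read off z from the local data of y; the transposition corrections are then trivial.\<close>

lemma Gnd0_in_param_map_image:
  assumes y: "y \<in> Gnd0 n d" and root: "snd y [] = []"
  shows "y \<in> param_map d ` (\<Pi>\<^sub>E v\<in>tree_V d. stab_pairs n d)"
proof -
  note Y = Gnd_memD[OF y[unfolded Gnd0_iff, THEN conjunct1]]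
  define z where "z = (\<lambda>v\<in>tree_V d. (fst y v, loc_perm d (snd y) v))"
  have z: "z \<in> (\<Pi>\<^sub>E v\<in>tree_V d. stab_pairs n d)"
    using Y(2) y loc_perm_permutes[OF Y(1)] by (auto simp: z_def stab_pairs_def Gnd0_iff)
  have bp: "build_perm [] (corrected_perm z) (snd (z [])) w = loc_perm d (snd y) w" if "w \<in> tree_V d" for w
    using that
  proof (induction w rule: rev_induct)
    case (snoc a w)
    let ?q = "loc_perm d (snd y) (w @ [a])"
    have w: "w \<in> tree_V d" "a < d" using snoc.prems by (auto simp: tree_V_snoc)
    have "nbr w a = w @ [a]" using snoc.prems by (auto simp: nbr_def tree_V_snoc)
    then have "?q a = build_perm [] (corrected_perm z) (snd (z [])) w a"
      using loc_perm_nbr_same_colour[OF Aut_nbr(1)[OF Y(1) w] w] snoc.IH[OF w(1)] by simp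
    moreover have "snd (z (w @ [a])) = ?q" using snoc.prems by (simp add: z_def)
    ultimately show ?case
      unfolding build_perm_snoc by (simp add: corrected_perm_def[of z "w @ [a]"])
  qed (simp add: build_perm_def z_def)
  have "snd (param_map d z) = snd y"
    using Aut_eqI[OF snd_param_map_in_Aut[OF z] Y(1)] snd_param_map_Nil[OF z] root
      loc_perm_snd_param_map[OF z] bp by simp
  moreover have "fst (param_map d z) = fst y" using Y(3) by (auto simp: param_map_def z_def)
  ultimately have "y = param_map d z" by (simp add: prod_eq_iff)
  then show ?thesis using z by (rule image_eqI)
qed

lemma param_map_in_Gnd_nbhd:
  assumes z0: "z0 \<in> (\<Pi>\<^sub>E v\<in>tree_V d. stab_pairs n d)" and z: "z \<in> (\<Pi>\<^sub>E v\<in>tree_V d. stab_pairs n d)"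
    and S: "S \<subseteq> tree_V d"
    and at_image: "\<And>v. v \<in> S \<Longrightarrow> z (snd (param_map d z0) v) = z0 (snd (param_map d z0) v)"
    and at_prefixes: "\<And>v k. v \<in> S \<Longrightarrow> k \<le> length v \<Longrightarrow> z (take k v) = z0 (take k v)"
  shows "param_map d z \<in> Gnd_nbhd n d (param_map d z0) S"
proof (rule Gnd0_in_Gnd_nbhd[OF param_map_in_Gnd0[OF z0] param_map_in_Gnd0[OF z] _ S])
  fix v assume v: "v \<in> S"
  have vV: "v \<in> tree_V d" using v S by blast
  have "snd (param_map d z0) v \<in> tree_V d" using Aut_tree_V[OF snd_param_map_in_Aut[OF z0] vV] .
  then have "fst (param_map d z) (snd (param_map d z0) v) = fst (param_map d z0) (snd (param_map d z0) v)"
    using at_image[OF v] by (simp add: fst_param_map)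
  moreover have "snd (param_map d z) v = snd (param_map d z0) v"
    using snd_param_map_cong[OF vV] at_prefixes[OF v] by blast
  ultimately show "fst (param_map d z) (snd (param_map d z0) v) = fst (param_map d z0) (snd (param_map d z0) v) \<and>
      snd (param_map d z) v = snd (param_map d z0) v" ..
qed

lemma openin_product_discrete_topologyI:
  assumes sub: "W \<subseteq> (\<Pi>\<^sub>E i\<in>I. A)"
    and agree: "\<And>z0. z0 \<in> W \<Longrightarrow> \<exists>J. finite J \<and> (\<forall>z\<in>\<Pi>\<^sub>E i\<in>I. A. (\<forall>i\<in>J \<inter> I. z i = z0 i) \<longrightarrow> z \<in> W)"
  shows "openin (product_topology (\<lambda>_. discrete_topology A) I) W"
  unfolding openin_product_topology_alt topspace_discrete_topology openin_discrete_topology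
proof
  fix z0 assume z0: "z0 \<in> W"
  then obtain J where J: "finite J" "\<forall>z\<in>\<Pi>\<^sub>E i\<in>I. A. (\<forall>i\<in>J \<inter> I. z i = z0 i) \<longrightarrow> z \<in> W"
    using agree by blast
  define U where "U = (\<lambda>i. if i \<in> J then {z0 i} else A)"
  have "{i \<in> I. U i \<noteq> A} \<subseteq> J" by (auto simp: U_def)
  then have "finite {i \<in> I. U i \<noteq> A}" using J(1) by (rule finite_subset)
  moreover have U_sub: "\<forall>i\<in>I. U i \<subseteq> A" using z0 sub by (auto simp: U_def PiE_mem)
  moreover have "z0 \<in> Pi\<^sub>E I U" using z0 sub by (auto simp: U_def PiE_iff)
  moreover have "Pi\<^sub>E I U \<subseteq> W"
  proof
    fix z assume z: "z \<in> Pi\<^sub>E I U"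
    then have "z \<in> (\<Pi>\<^sub>E i\<in>I. A)" using U_sub by (auto simp: PiE_iff)
    moreover have "\<forall>i\<in>J \<inter> I. z i = z0 i" using z by (auto simp: U_def dest: PiE_mem)
    ultimately show "z \<in> W" using J(2) by blast
  qed
  ultimately show "\<exists>U. finite {i \<in> I. U i \<noteq> A} \<and> (\<forall>i\<in>I. U i \<subseteq> A) \<and> z0 \<in> Pi\<^sub>E I U \<and> Pi\<^sub>E I U \<subseteq> W"
    by (intro exI[of _ U]) simp
qed

text \<open>Near z0, param_map only depends on the coordinates at the images of S under
  snd (param_map z0) and at the prefixes of words in S (the path from the root).\<close>

theorem continuous_map_param_map: "continuous_map (param_space n d) (Gnd_top n d) (param_map d)"
  unfolding continuous_map_def topspace_Gnd_top topspace_product_topology topspace_discrete_topology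
proof (intro conjI allI impI)
  show "param_map d \<in> (\<Pi>\<^sub>E v\<in>tree_V d. stab_pairs n d) \<rightarrow> Gnd n d"
    using param_map_in_Gnd0 by (auto simp: Gnd0_iff)
  fix W assume W: "openin (Gnd_top n d) W"
  show "openin (param_space n d) {z \<in> \<Pi>\<^sub>E v\<in>tree_V d. stab_pairs n d. param_map d z \<in> W}"
  proof (rule openin_product_discrete_topologyI)
    fix z0 assume "z0 \<in> {z \<in> \<Pi>\<^sub>E v\<in>tree_V d. stab_pairs n d. param_map d z \<in> W}"
    then have z0: "z0 \<in> (\<Pi>\<^sub>E v\<in>tree_V d. stab_pairs n d)" "param_map d z0 \<in> W" by auto
    obtain S where S: "finite S" "S \<subseteq> tree_V d" "Gnd_nbhd n d (param_map d z0) S \<subseteq> W"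
      using W z0(2) unfolding openin_Gnd_top by blast
    define J where "J = snd (param_map d z0) ` S \<union> (\<Union>s\<in>S. (\<lambda>k. take k s) ` {..length s})"
    have "param_map d z \<in> W"
      if z: "z \<in> (\<Pi>\<^sub>E v\<in>tree_V d. stab_pairs n d)" and zJ: "\<forall>v\<in>J \<inter> tree_V d. z v = z0 v" for z
    proof -
      have "param_map d z \<in> Gnd_nbhd n d (param_map d z0) S"
      proof (rule param_map_in_Gnd_nbhd[OF z0(1) z S(2)])
        fix v assume v: "v \<in> S"
        then have vV: "v \<in> tree_V d" using S(2) by blast
        show "z (snd (param_map d z0) v) = z0 (snd (param_map d z0) v)"
          using zJ v Aut_tree_V[OF snd_param_map_in_Aut[OF z0(1)] vV] by (auto simp: J_def)
        fix k assume "k \<le> length v"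
        then show "z (take k v) = z0 (take k v)"
          using zJ v tree_V_appendD[of "take k v" "drop k v"] vV by (auto simp: J_def)
      qed
      then show ?thesis using S(3) by blast
    qed
    moreover have "finite J" using S(1) by (simp add: J_def)
    ultimately show "\<exists>J. finite J \<and> (\<forall>z\<in>\<Pi>\<^sub>E v\<in>tree_V d. stab_pairs n d.
        (\<forall>v\<in>J \<inter> tree_V d. z v = z0 v) \<longrightarrow> z \<in> {z \<in> \<Pi>\<^sub>E v\<in>tree_V d. stab_pairs n d. param_map d z \<in> W})"
      by blast
  qed auto
qed

context coset_enum
begin

lemma Gnd_mult_phi_in_Gnd0:
  assumes x: "x \<in> Gnd n d" and g: "g \<in> G"
    and cosets: "\<forall>w\<in>tree_V d. loc_perm d g w \<in> \<beta> (inv (fst x (snd x (g w))) 0)"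
  shows "Gnd_mult d x (\<phi> g) \<in> Gnd0 n d"
proof -
  note X = Gnd_memD[OF x] and Gg = G_grpD[OF g]
  have "fst (Gnd_mult d x (\<phi> g)) v 0 = 0" if v: "v \<in> tree_V d" for v
  proof -
    let ?w = "aut_inv d (snd x) v"
    let ?u = "aut_inv d g ?w"
    let ?f = "loc_perm d g ?u"
    have w: "?w \<in> tree_V d" "snd x ?w = v" using aut_inv_in_tree_V[OF X(1) v] Aut_aut_inv[OF X(1) v] .
    have u: "?u \<in> tree_V d" "g ?u = ?w" using aut_inv_in_tree_V[OF Gg(1) w(1)] Aut_aut_inv[OF Gg(1) w(1)] .
    have i: "inv (fst x v) 0 < n" using permutes_in_image[OF permutes_inv[OF X(2)[OF v]]] n_pos by simp
    have "?f \<in> \<beta> (inv (fst x v) 0)" using cosets u w by auto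
    then have "\<beta> (\<alpha> ?f 0) = \<beta> (inv (fst x v) 0)" using \<beta>_coset_action_0 \<beta>_in_lcosets[OF i] by blast
    then have "\<alpha> ?f 0 = inv (fst x v) 0"
      using \<beta>_inj[OF coset_action_less[OF Gg(2)[OF u(1)] n_pos] i] by blast
    moreover have "fst (Gnd_mult d x (\<phi> g)) v = fst x v \<circ> \<alpha> ?f"
      using v fst_phi[OF w(1)] by (simp add: Gnd_mult_def)
    ultimately show ?thesis using permutes_inverses(1)[OF X(2)[OF v]] by simp
  qed
  then show ?thesis using Gnd_mult_closed[OF x phi_in_Gnd[OF g]] by (simp add: Gnd0_iff)
qed

lemma Gnd_mult_phi_coset:
  assumes x: "x \<in> Gnd n d" and g: "g \<in> G"
  shows "Gnd_mult d (Gnd_mult d x (\<phi> g)) ` \<phi> ` G = Gnd_mult d x ` \<phi> ` G"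
proof -
  have mult: "Gnd_mult d (Gnd_mult d x (\<phi> g)) (\<phi> k) = Gnd_mult d x (\<phi> (g \<circ> k))" if k: "k \<in> G" for k
    using Gnd_mult_assoc[OF x phi_in_Gnd[OF g]] phi_comp[OF g k] by simp
  have shift: "\<phi> ` G = (\<lambda>k. \<phi> (g \<circ> k)) ` G"
  proof
    show "(\<lambda>k. \<phi> (g \<circ> k)) ` G \<subseteq> \<phi> ` G" using G_grp_comp[OF g] by auto
    show "\<phi> ` G \<subseteq> (\<lambda>k. \<phi> (g \<circ> k)) ` G"
    proof
      fix t assume "t \<in> \<phi> ` G"
      then obtain k where k: "k \<in> G" "t = \<phi> k" by blast
      have "g \<circ> (aut_inv d g \<circ> k) = k"
        using comp_aut_inv(1)[OF G_grpD(1)[OF g]] by (simp add: comp_assoc[symmetric])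
      then show "t \<in> (\<lambda>k. \<phi> (g \<circ> k)) ` G"
        using k G_grp_comp[OF G_grp_aut_inv[OF g] k(1)] by (metis image_eqI)
    qed
  qed
  have "Gnd_mult d (Gnd_mult d x (\<phi> g)) ` \<phi> ` G = Gnd_mult d x ` (\<lambda>k. \<phi> (g \<circ> k)) ` G"
    using mult by (simp add: image_image)
  then show ?thesis by (simp only: shift[symmetric])
qed

end

context orbit_preserving_coset_enum
begin

lemma build_data_cosets:
  assumes C: "\<And>u. u \<in> tree_V d \<Longrightarrow> C u \<in> lcosets F' F" and r0: "r0 \<in> tree_V d" and p0: "p0 \<in> C r0"
  shows "build_data d r0 C (\<lambda>w u a b. SOME q. q \<in> C u \<and> q a = b) p0"
proof
  show "C u \<subseteq> {p. p permutes {..<d}}" if "u \<in> tree_V d" for u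
    using lcoset_subset[OF C[OF that]] F'_permutes by blast
  fix w u u' a p assume u: "u \<in> tree_V d" "u' \<in> tree_V d" and a: "a < d" and p: "p \<in> C u'"
  have "\<exists>q. q \<in> C u \<and> q a = p a"
    using lcoset_realises[OF C[OF u(1)] _ a] lcoset_subset[OF C[OF u(2)]] p by blast
  then show "(SOME q. q \<in> C u \<and> q a = p a) \<in> C u \<and> (SOME q. q \<in> C u \<and> q a = p a) a = p a"
    by (rule someI_ex)
qed (use r0 p0 in simp_all)

lemma ex_G_grp_loc_perm_in_cosets:
  assumes C: "\<And>u. u \<in> tree_V d \<Longrightarrow> C u \<in> lcosets F' F" and fin: "finite {u \<in> tree_V d. C u \<noteq> F}"
    and r0: "r0 \<in> tree_V d"
  shows "\<exists>g\<in>G. g [] = r0 \<and> (\<forall>w\<in>tree_V d. loc_perm d g w \<in> C (g w))"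
proof -
  obtain p0 where p0: "p0 \<in> C r0" using C[OF r0] id_in_F by (auto simp: lcosets_def)
  interpret B: build_data d r0 C "\<lambda>w u a b. SOME q. q \<in> C u \<and> q a = b" p0
    using build_data_cosets[of C, OF C r0 p0] .
  define g where "g = build_aut d r0 (\<lambda>w u a b. SOME q. q \<in> C u \<and> q a = b) p0"
  have gA: "g \<in> Aut d" and g0: "g [] = r0" unfolding g_def by (rule B.build_aut_in_Aut B.build_aut_Nil)+
  have gC: "loc_perm d g w \<in> C (g w)" if "w \<in> tree_V d" for w
    using B.loc_perm_build_aut[OF that] B.build_perm_in[OF that] unfolding g_def by simp
  have "{w \<in> tree_V d. loc_perm d g w \<notin> F} \<subseteq> g -` {u \<in> tree_V d. C u \<noteq> F} \<inter> tree_V d"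
    using gC Aut_tree_V[OF gA] by fastforce
  moreover have "finite (g -` {u \<in> tree_V d. C u \<noteq> F} \<inter> tree_V d)"
    using finite_vimage_IntI[OF fin Aut_inj_on[OF gA]] .
  ultimately have "finite {w \<in> tree_V d. loc_perm d g w \<notin> F}" by (rule finite_subset)
  moreover have "loc_perm d g w \<in> F'" if "w \<in> tree_V d" for w
    using gC[OF that] lcoset_subset[OF C[OF Aut_tree_V[OF gA that]]] by blast
  ultimately have "g \<in> G" using gA by (simp add: G_grp_def)
  then show ?thesis using g0 gC by blast
qed

text \<open>Choose g whose local permutations lie in the cosets prescribed by x, so that all
  coordinates of x \<phi>(g) lie in S_{n-1}, and whose root is placed so that x \<phi>(g) fixes the root.\<close>

lemma ex_G_grp_mult_phi_root_stabiliser: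
  assumes x: "x \<in> Gnd n d"
  shows "\<exists>g\<in>G. Gnd_mult d x (\<phi> g) \<in> Gnd0 n d \<and> snd (Gnd_mult d x (\<phi> g)) [] = []"
proof -
  note X = Gnd_memD[OF x]
  define C where "C = (\<lambda>u. \<beta> (inv (fst x (snd x u)) 0))"
  have inv0: "inv (fst x (snd x u)) 0 < n" "inv (fst x (snd x u)) 0 = 0 \<longleftrightarrow> fst x (snd x u) 0 = 0"
    if "u \<in> tree_V d" for u
    using permutes_in_image[OF permutes_inv[OF X(2)[OF Aut_tree_V[OF X(1) that]]], of 0] n_pos
      permutes_inv_eq[OF X(2)[OF Aut_tree_V[OF X(1) that]]] by auto
  have C_lcosets: "C u \<in> lcosets F' F" if "u \<in> tree_V d" for u
    using \<beta>_in_lcosets inv0[OF that] by (simp add: C_def)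
  have "{u \<in> tree_V d. C u \<noteq> F} \<subseteq> snd x -` {v \<in> tree_V d. fst x v 0 \<noteq> 0} \<inter> tree_V d"
  proof
    fix u assume "u \<in> {u \<in> tree_V d. C u \<noteq> F}"
    then have u: "u \<in> tree_V d" "\<beta> (inv (fst x (snd x u)) 0) \<noteq> \<beta> 0" by (auto simp: C_def \<beta>_0)
    then have "fst x (snd x u) 0 \<noteq> 0" using inv0(2)[OF u(1)] by auto
    then show "u \<in> snd x -` {v \<in> tree_V d. fst x v 0 \<noteq> 0} \<inter> tree_V d"
      using u(1) Aut_tree_V[OF X(1) u(1)] by simp
  qed
  then have "finite {u \<in> tree_V d. C u \<noteq> F}"
    using finite_vimage_IntI[OF X(4) Aut_inj_on[OF X(1)]] finite_subset by blast
  then obtain g where g: "g \<in> G" "g [] = aut_inv d (snd x) []" "\<forall>w\<in>tree_V d. loc_perm d g w \<in> C (g w)"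
    using ex_G_grp_loc_perm_in_cosets[of C, OF C_lcosets] aut_inv_in_tree_V[OF X(1) tree_V_Nil] by blast
  have "Gnd_mult d x (\<phi> g) \<in> Gnd0 n d" using Gnd_mult_phi_in_Gnd0[OF x g(1)] g(3) by (simp add: C_def)
  moreover have "snd (Gnd_mult d x (\<phi> g)) [] = []"
    using g(2) Aut_aut_inv[OF X(1) tree_V_Nil] by (simp add: Gnd_mult_def snd_phi)
  ultimately show ?thesis using g(1) by blast
qed

theorem cocompact_phi_image: "cocompact (Gnd_top n d) (Gnd_mult d) (\<phi> ` G)"
proof (rule cocompactI)
  show "compactin (Gnd_top n d) (param_map d ` topspace (param_space n d))"
    using image_compactin[OF _ continuous_map_param_map] compact_param_space
    by (simp add: compact_space_def)
  fix x assume "x \<in> topspace (Gnd_top n d)"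
  then have x: "x \<in> Gnd n d" by (simp add: topspace_Gnd_top)
  then obtain g where g: "g \<in> G" "Gnd_mult d x (\<phi> g) \<in> Gnd0 n d" "snd (Gnd_mult d x (\<phi> g)) [] = []"
    using ex_G_grp_mult_phi_root_stabiliser by blast
  then have "Gnd_mult d x (\<phi> g) \<in> param_map d ` topspace (param_space n d)"
    using Gnd0_in_param_map_image by simp
  moreover have "Gnd_mult d x ` \<phi> ` G = Gnd_mult d (Gnd_mult d x (\<phi> g)) ` \<phi> ` G"
    using Gnd_mult_phi_coset[OF x g(1)] by simp
  ultimately show "\<exists>c\<in>param_map d ` topspace (param_space n d). Gnd_mult d x ` \<phi> ` G = Gnd_mult d c ` \<phi> ` G"
    by blast
qed

end

theorem proposition2:
  fixes d n :: nat and F F' :: "(nat \<Rightarrow> nat) set" and \<beta> :: "nat \<Rightarrow> (nat \<Rightarrow> nat) set"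
  assumes "d \<ge> 3"
    and "perm_group {..<d} F" and "perm_group {..<d} F'" and "F \<subseteq> F'"
    and "\<forall>f'\<in>F'. \<forall>a<d. f' a \<in> (\<lambda>f. f a) ` F"
    and "n = card (lcosets F' F)"
    and "bij_betw \<beta> {..<n} (lcosets F' F)" and "\<beta> 0 = F"
  shows "phi n d \<beta> ` G_grp d F F' \<subseteq> Gnd n d
    \<and> (\<forall>g\<in>G_grp d F F'. \<forall>h\<in>G_grp d F F'. phi n d \<beta> (g \<circ> h) = Gnd_mult d (phi n d \<beta> g) (phi n d \<beta> h))
    \<and> inj_on (phi n d \<beta>) (G_grp d F F')
    \<and> continuous_map (G_top d F F') (Gnd_top n d) (phi n d \<beta>)
    \<and> closedin (Gnd_top n d) (phi n d \<beta> ` G_grp d F F')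
    \<and> cocompact (Gnd_top n d) (Gnd_mult d) (phi n d \<beta> ` G_grp d F F')"
proof -
  interpret orbit_preserving_coset_enum d n F F' \<beta>
    using assms(2-8) by unfold_locales
  show ?thesis
    using phi_in_Gnd phi_comp inj_on_subset[OF inj_phi subset_UNIV] continuous_map_phi closedin_phi_image
      cocompact_phi_image by blast
qed


end
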